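(* Let $f:\{0,1\}^n\times\{0,1\}^n\to\{0,1\}$ be a total function with $f(x,y)=g(x\wedge y)$ for some $g:\{0,1\}^n\to\{0,1\}$. Then for all $z\in\{0,1\}^n$: \[BQC(f)=\Omega\!\left(\frac{|z|}{1-\log|\hat{g}_z|}\right),\] with an absolute constant in $\Omega$.
   Context: $x\wedge y$ is the bitwise AND; $|z|$ is the Hamming weight of $z$; $\hat{g}_z=2^{-n}\sum_{a\in\{0,1\}^n}g(a)(-1)^{\sum_i a_iz_i}$; $\log$ is base 2. Quantum communication model (Yao, no prior entanglement): Alice receives $x$, Bob $y$; each holds private qubits initialized to the input and $|0\rangle$; in each round one player applies a unitary to his qubits and sends one qubit; at the end a qubit is measured giving the output; the cost is the number of qubits exchanged. $BQC(f)$ is the minimum cost of a quantum protocol computing $f$ with error probability at most $1/3$ on every input. *)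

theory Defs
  imports Complex_Main
begin

text \<open>Bit strings in {0,1}^n are modelled as functions nat => bool vanishing from index n on.
  Basis states of an m-qubit register are modelled the same way (bits of indices < m).\<close>

type_synonym cfg = "nat \<Rightarrow> bool"

definition cube :: "nat \<Rightarrow> cfg set" where
  "cube n = {a. \<forall>i\<ge>n. \<not> a i}"

definition band :: "cfg \<Rightarrow> cfg \<Rightarrow> cfg" where
  "band x y = (\<lambda>i. x i \<and> y i)"

definition hw :: "nat \<Rightarrow> cfg \<Rightarrow> nat" where
  "hw n z = card {i. i < n \<and> z i}"

definition fourier :: "nat \<Rightarrow> (cfg \<Rightarrow> bool) \<Rightarrow> cfg \<Rightarrow> real" where
  "fourier n g z = (1 / 2 ^ n) *
     (\<Sum>a\<in>cube n. (if g a then 1 else 0) * (-1) ^ card {i. i < n \<and> a i \<and> z i})"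

definition local_cfgs :: "nat set \<Rightarrow> cfg set" where
  "local_cfgs S = {a. \<forall>i. i \<notin> S \<longrightarrow> \<not> a i}"

definition restr :: "nat set \<Rightarrow> cfg \<Rightarrow> cfg" where
  "restr S s = (\<lambda>i. if i \<in> S then s i else False)"

text \<open>A matrix U (indexed by local configurations, U c a = <c|U|a>) is unitary on S.\<close>
definition unitary_on :: "nat set \<Rightarrow> (cfg \<Rightarrow> cfg \<Rightarrow> complex) \<Rightarrow> bool" where
  "unitary_on S U \<longleftrightarrow>
     (\<forall>a\<in>local_cfgs S. \<forall>b\<in>local_cfgs S.
        (\<Sum>c\<in>local_cfgs S. cnj (U c a) * U c b) = (if a = b then 1 else 0))"

definition apply_local :: "nat \<Rightarrow> nat set \<Rightarrow> (cfg \<Rightarrow> cfg \<Rightarrow> complex) \<Rightarrow> (cfg \<Rightarrow> complex) \<Rightarrow> (cfg \<Rightarrow> complex)" where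
  "apply_local m S U v = (\<lambda>s. \<Sum>t\<in>{t\<in>cube m. \<forall>i. i \<notin> S \<longrightarrow> t i = s i}.
        U (restr S s) (restr S t) * v t)"

text \<open>Ownership: own i = True means qubit i is held by Alice, False by Bob.
  A round (p, U, q): player p (True = Alice) applies unitary U on all qubits he holds,
  then sends his qubit q to the other player.\<close>

type_synonym round = "bool \<times> (cfg \<Rightarrow> cfg \<Rightarrow> complex) \<times> nat"

definition owned :: "nat \<Rightarrow> (nat \<Rightarrow> bool) \<Rightarrow> bool \<Rightarrow> nat set" where
  "owned m own p = {i. i < m \<and> own i = p}"

fun valid_rounds :: "nat \<Rightarrow> round list \<Rightarrow> (nat \<Rightarrow> bool) \<Rightarrow> bool" where
  "valid_rounds m [] own = True"
| "valid_rounds m ((p, U, q) # rs) own =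
     (q < m \<and> own q = p \<and> unitary_on (owned m own p) U \<and> valid_rounds m rs (own(q := \<not> p)))"

fun run :: "nat \<Rightarrow> round list \<Rightarrow> (nat \<Rightarrow> bool) \<Rightarrow> (cfg \<Rightarrow> complex) \<Rightarrow> (nat \<Rightarrow> bool) \<times> (cfg \<Rightarrow> complex)" where
  "run m [] own v = (own, v)"
| "run m ((p, U, q) # rs) own v = run m rs (own(q := \<not> p)) (apply_local m (owned m own p) U v)"

text \<open>A protocol: number of qubits m (>= 2n), initial ownership (Alice holds her n input qubits
  0..n-1, Bob holds his n input qubits n..2n-1, ancillas (initialised to 0) distributed arbitrarily),
  the communication rounds, and a final local unitary by the final player followed by the
  measurement of one of his qubits.\<close>

record protocol =
  nqubits :: nat
  owner0 :: "nat \<Rightarrow> bool"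
  rounds :: "round list"
  fin_player :: bool
  fin_unitary :: "cfg \<Rightarrow> cfg \<Rightarrow> complex"
  out_qubit :: nat

definition valid_protocol :: "nat \<Rightarrow> protocol \<Rightarrow> bool" where
  "valid_protocol n P \<longleftrightarrow>
     (let m = nqubits P; own' = fst (run m (rounds P) (owner0 P) (\<lambda>_. 0)) in
      2 * n \<le> m \<and>
      (\<forall>i<n. owner0 P i) \<and> (\<forall>i. n \<le> i \<and> i < 2 * n \<longrightarrow> \<not> owner0 P i) \<and>
      valid_rounds m (rounds P) (owner0 P) \<and>
      unitary_on (owned m own' (fin_player P)) (fin_unitary P) \<and>
      out_qubit P < m \<and> own' (out_qubit P) = fin_player P)"

definition init_basis :: "nat \<Rightarrow> cfg \<Rightarrow> cfg \<Rightarrow> cfg" where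
  "init_basis n x y = (\<lambda>i. if i < n then x i else if i < 2 * n then y (i - n) else False)"

definition final_state :: "nat \<Rightarrow> protocol \<Rightarrow> cfg \<Rightarrow> cfg \<Rightarrow> (cfg \<Rightarrow> complex)" where
  "final_state n P x y =
     (let m = nqubits P;
          (own', v) = run m (rounds P) (owner0 P) (\<lambda>s. if s = init_basis n x y then 1 else 0)
      in apply_local m (owned m own' (fin_player P)) (fin_unitary P) v)"

definition accept_prob :: "nat \<Rightarrow> protocol \<Rightarrow> cfg \<Rightarrow> cfg \<Rightarrow> real" where
  "accept_prob n P x y =
     (\<Sum>s\<in>{s\<in>cube (nqubits P). s (out_qubit P)}. (cmod (final_state n P x y s))\<^sup>2)"

definition computes :: "nat \<Rightarrow> (cfg \<Rightarrow> cfg \<Rightarrow> bool) \<Rightarrow> protocol \<Rightarrow> bool" where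
  "computes n f P \<longleftrightarrow>
     (\<forall>x\<in>cube n. \<forall>y\<in>cube n.
        (if f x y then accept_prob n P x y \<ge> 2/3 else accept_prob n P x y \<le> 1/3))"

definition BQC :: "nat \<Rightarrow> (cfg \<Rightarrow> cfg \<Rightarrow> bool) \<Rightarrow> nat" where
  "BQC n f = (LEAST c. \<exists>P. valid_protocol n P \<and> computes n f P \<and> length (rounds P) = c)"

end

theory Submission
  imports Defs
begin

text \<open>By Yao's decomposition, the acceptance probability of a protocol with \<open>c\<close> rounds is a
  bilinear form \<open>Re (\<Sum>w w'<2\<^sup>c. a x w w' * b y w w')\<close> in vectors bounded by \<open>1\<close>, so its nuclear
  norm is at most \<open>2 * 4\<^sup>c\<close>; majority vote over \<open>2 e\<close> repetitions turns it into a matrix of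
  nuclear norm at most \<open>4\<^sup>e (1 + 2 * 4\<^sup>c)\<^sup>2\<^sup>e\<close> that approximates \<open>f\<close> entrywise within \<open>(8/9)\<^sup>e\<close>.
  Fixing the input bits outside the support \<open>Z\<close> of \<open>z\<close> suitably, the restriction of \<open>g\<close> has a
  character coefficient on \<open>Z\<close> of size at least \<open>2\<^sup>k \<bar>\<hat>g\<^sub>z\<bar>\<close>, \<open>k = |z|\<close>. The product witness
  \<open>Psi Z\<close> turns this into a correlation \<open>\<bar>\<hat>g\<^sub>z\<bar>\<close> with \<open>g (u \<and> v)\<close>, while its correlation with any
  matrix of nuclear norm \<open>W\<close> is at most \<open>W (2/3)\<^sup>k\<^sup>/\<^sup>2\<close>. With \<open>e \<approx> 6 (1 - log \<bar>\<hat>g\<^sub>z\<bar>)\<close> this forces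
  \<open>k = O(c (1 - log \<bar>\<hat>g\<^sub>z\<bar>))\<close>.\<close>

section \<open>Configurations of sets of qubits\<close>

definition join :: "cfg \<Rightarrow> cfg \<Rightarrow> cfg" where
  "join c d = (\<lambda>i. c i \<or> d i)"

lemma local_cfgs_iff: "a \<in> local_cfgs S \<longleftrightarrow> (\<forall>i. a i \<longrightarrow> i \<in> S)"
  unfolding local_cfgs_def by auto

lemma local_cfgs_empty: "local_cfgs {} = {\<lambda>_. False}"
  unfolding local_cfgs_def by auto

lemma cube_eq_local_cfgs: "cube m = local_cfgs {..<m}"
  unfolding cube_def local_cfgs_def by (auto simp: not_less)

lemma bij_betw_Pow_local_cfgs: "bij_betw (\<lambda>A i. i \<in> A) (Pow S) (local_cfgs S)"
  by (rule bij_betw_byWitness[where f' = "\<lambda>a. {i. a i}"]) (auto simp: local_cfgs_iff)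

lemma finite_local_cfgs: "finite S \<Longrightarrow> finite (local_cfgs S)"
  using bij_betw_finite[OF bij_betw_Pow_local_cfgs] by simp

lemma card_local_cfgs: "finite S \<Longrightarrow> card (local_cfgs S) = 2 ^ card S"
  by (metis bij_betw_same_card bij_betw_Pow_local_cfgs card_Pow)

lemma restr_in_local_cfgs: "restr S s \<in> local_cfgs S"
  unfolding restr_def local_cfgs_iff by auto

lemma restr_eq_self: "a \<in> local_cfgs S \<Longrightarrow> restr S a = a"
  unfolding restr_def local_cfgs_iff by auto

lemma join_in_local_cfgs: "c \<in> local_cfgs S \<Longrightarrow> d \<in> local_cfgs T \<Longrightarrow> join c d \<in> local_cfgs (S \<union> T)"
  unfolding join_def local_cfgs_iff by auto

lemma restr_join_left:
  "S \<inter> T = {} \<Longrightarrow> c \<in> local_cfgs S \<Longrightarrow> d \<in> local_cfgs T \<Longrightarrow> restr S (join c d) = c"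
  unfolding join_def restr_def local_cfgs_iff by (rule ext) auto

lemma restr_join_right:
  "S \<inter> T = {} \<Longrightarrow> c \<in> local_cfgs S \<Longrightarrow> d \<in> local_cfgs T \<Longrightarrow> restr T (join c d) = d"
  unfolding join_def restr_def local_cfgs_iff by (rule ext) auto

lemma join_restr: "a \<in> local_cfgs (S \<union> T) \<Longrightarrow> join (restr S a) (restr T a) = a"
  unfolding join_def restr_def local_cfgs_iff by (rule ext) auto

lemma sum_local_cfgs_Un:
  assumes "S \<inter> T = {}" "finite S" "finite T"
  shows "(\<Sum>a\<in>local_cfgs (S \<union> T). h a) = (\<Sum>c\<in>local_cfgs S. \<Sum>d\<in>local_cfgs T. h (join c d))"
proof -
  have "bij_betw (\<lambda>(c, d). join c d) (local_cfgs S \<times> local_cfgs T) (local_cfgs (S \<union> T))"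
    by (rule bij_betw_byWitness[where f' = "\<lambda>a. (restr S a, restr T a)"])
       (use assms in \<open>auto simp: restr_join_left restr_join_right join_restr join_in_local_cfgs
          restr_in_local_cfgs\<close>)
  then have "(\<Sum>a\<in>local_cfgs (S \<union> T). h a) = (\<Sum>(c, d)\<in>local_cfgs S \<times> local_cfgs T. h (join c d))"
    by (simp add: sum.reindex_bij_betw[symmetric] case_prod_unfold)
  also have "\<dots> = (\<Sum>c\<in>local_cfgs S. \<Sum>d\<in>local_cfgs T. h (join c d))"
    by (simp add: sum.cartesian_product finite_local_cfgs assms)
  finally show ?thesis .
qed

lemma sum_cube_split:
  assumes "S \<inter> T = {}" "S \<union> T = {..<m}"
  shows "(\<Sum>s\<in>cube m. h s) = (\<Sum>c\<in>local_cfgs S. \<Sum>d\<in>local_cfgs T. h (join c d))"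
proof -
  have "finite S" "finite T" using assms(2) by (metis finite_Un finite_lessThan)+
  then show ?thesis using sum_local_cfgs_Un[OF assms(1)] assms(2) by (simp add: cube_eq_local_cfgs)
qed

lemma sum_local_cfgs_insert:
  assumes "j \<notin> Z" "finite Z"
  shows "(\<Sum>u\<in>local_cfgs (insert j Z). h u) = (\<Sum>u\<in>local_cfgs Z. h u + h (u(j := True)))"
proof -
  have split: "local_cfgs (insert j Z) = local_cfgs Z \<union> (\<lambda>u. u(j := True)) ` local_cfgs Z"
  proof
    show "local_cfgs (insert j Z) \<subseteq> local_cfgs Z \<union> (\<lambda>u. u(j := True)) ` local_cfgs Z"
    proof
      fix a assume a: "a \<in> local_cfgs (insert j Z)"
      show "a \<in> local_cfgs Z \<union> (\<lambda>u. u(j := True)) ` local_cfgs Z"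
      proof (cases "a j")
        case True
        then have "a = (a(j := False))(j := True)"
          by (simp add: fun_eq_iff)
        moreover have "a(j := False) \<in> local_cfgs Z"
          using a by (auto simp: local_cfgs_iff)
        ultimately show ?thesis by blast
      next
        case False
        then show ?thesis using a by (auto simp: local_cfgs_iff)
      qed
    qed
  qed (auto simp: local_cfgs_iff)
  have disjoint: "local_cfgs Z \<inter> (\<lambda>u. u(j := True)) ` local_cfgs Z = {}"
    using assms(1) by (auto simp: local_cfgs_iff)
  have inj: "inj_on (\<lambda>u. u(j := True)) (local_cfgs Z)"
  proof (rule inj_onI)
    fix x y assume "x \<in> local_cfgs Z" "y \<in> local_cfgs Z" "x(j := True) = y(j := True)"
    then show "x = y" using assms(1) unfolding local_cfgs_iff fun_eq_iff by (metis fun_upd_other)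
  qed
  have "(\<Sum>u\<in>local_cfgs (insert j Z). h u)
      = (\<Sum>u\<in>local_cfgs Z. h u) + (\<Sum>u\<in>(\<lambda>u. u(j := True)) ` local_cfgs Z. h u)"
    unfolding split by (rule sum.union_disjoint) (auto simp: finite_local_cfgs assms disjoint)
  also have "(\<Sum>u\<in>(\<lambda>u. u(j := True)) ` local_cfgs Z. h u) = (\<Sum>u\<in>local_cfgs Z. h (u(j := True)))"
    by (simp add: sum.reindex[OF inj])
  finally show ?thesis by (simp add: sum.distrib)
qed

lemma sum_prod_local_cfgs:
  fixes f :: "nat \<Rightarrow> bool \<Rightarrow> 'a::comm_semiring_1"
  assumes "finite Z"
  shows "(\<Sum>u\<in>local_cfgs Z. \<Prod>i\<in>Z. f i (u i)) = (\<Prod>i\<in>Z. f i False + f i True)"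
  using assms
proof (induction rule: finite_induct)
  case empty
  then show ?case by (simp add: local_cfgs_empty)
next
  case (insert j Z)
  have "(\<Sum>u\<in>local_cfgs (insert j Z). \<Prod>i\<in>insert j Z. f i (u i))
      = (\<Sum>u\<in>local_cfgs Z. (f j False + f j True) * (\<Prod>i\<in>Z. f i (u i)))"
  proof (subst sum_local_cfgs_insert[OF insert(2,1)], rule sum.cong[OF refl])
    fix u assume "u \<in> local_cfgs Z"
    then have "u j = False" using insert(2) by (auto simp: local_cfgs_iff)
    moreover have "(\<Prod>i\<in>Z. f i ((u(j := True)) i)) = (\<Prod>i\<in>Z. f i (u i))"
      using insert(2) by (intro prod.cong) auto
    ultimately show "(\<Prod>i\<in>insert j Z. f i (u i)) + (\<Prod>i\<in>insert j Z. f i ((u(j := True)) i))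
        = (f j False + f j True) * (\<Prod>i\<in>Z. f i (u i))"
      using insert(1,2) by (simp add: distrib_right)
  qed
  also have "\<dots> = (\<Prod>i\<in>insert j Z. f i False + f i True)"
    using insert by (simp add: sum_distrib_left[symmetric])
  finally show ?case .
qed

lemma sum_sum_prod_local_cfgs:
  fixes f :: "nat \<Rightarrow> bool \<Rightarrow> bool \<Rightarrow> 'a::comm_semiring_1"
  assumes "finite Z"
  shows "(\<Sum>u\<in>local_cfgs Z. \<Sum>v\<in>local_cfgs Z. \<Prod>i\<in>Z. f i (u i) (v i))
       = (\<Prod>i\<in>Z. f i False False + f i False True + f i True False + f i True True)"
proof -
  have "(\<Sum>u\<in>local_cfgs Z. \<Sum>v\<in>local_cfgs Z. \<Prod>i\<in>Z. f i (u i) (v i))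
      = (\<Sum>u\<in>local_cfgs Z. \<Prod>i\<in>Z. f i (u i) False + f i (u i) True)"
    by (intro sum.cong refl) (rule sum_prod_local_cfgs[OF assms])
  also have "\<dots> = (\<Prod>i\<in>Z. (f i False False + f i False True) + (f i True False + f i True True))"
    by (rule sum_prod_local_cfgs[OF assms])
  finally show ?thesis by (simp add: add.assoc)
qed

section \<open>Local vectors and local unitaries\<close>

definition sqnorm :: "nat set \<Rightarrow> (cfg \<Rightarrow> complex) \<Rightarrow> real" where
  "sqnorm S F = (\<Sum>c\<in>local_cfgs S. (cmod (F c))\<^sup>2)"

definition matvec :: "nat set \<Rightarrow> (cfg \<Rightarrow> cfg \<Rightarrow> complex) \<Rightarrow> (cfg \<Rightarrow> complex) \<Rightarrow> cfg \<Rightarrow> complex" where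
  "matvec S U F = (\<lambda>c. \<Sum>c'\<in>local_cfgs S. U c c' * F c')"

definition cinner_on :: "(cfg \<Rightarrow> bool) \<Rightarrow> nat set \<Rightarrow> (cfg \<Rightarrow> complex) \<Rightarrow> (cfg \<Rightarrow> complex) \<Rightarrow> complex" where
  "cinner_on P S A B = (\<Sum>c\<in>local_cfgs S. if P c then cnj (A c) * B c else 0)"

lemma of_real_sqnorm: "complex_of_real (sqnorm S F) = (\<Sum>c\<in>local_cfgs S. cnj (F c) * F c)"
  unfolding sqnorm_def of_real_sum
  by (rule sum.cong[OF refl]) (subst complex_norm_square, simp add: mult.commute)

lemma cinner_on_self: "cinner_on (\<lambda>_. True) S A A = complex_of_real (sqnorm S A)"
  unfolding cinner_on_def of_real_sqnorm by simp

lemma sqnorm_insert: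
  "q \<notin> S \<Longrightarrow> finite S \<Longrightarrow>
     sqnorm (insert q S) A = (\<Sum>c\<in>local_cfgs S. (cmod (A c))\<^sup>2 + (cmod (A (c(q := True))))\<^sup>2)"
  unfolding sqnorm_def by (rule sum_local_cfgs_insert)

lemma sqnorm_indicator:
  "finite S \<Longrightarrow> sqnorm S (\<lambda>c. if c = r then 1 else 0) = (if r \<in> local_cfgs S then 1 else 0)"
  unfolding sqnorm_def
  by (simp add: if_distrib[of "\<lambda>z. (cmod z)\<^sup>2"] sum.delta' finite_local_cfgs cong: if_cong)

lemma sqnorm_matvec_unitary:
  assumes fin: "finite S" and U: "unitary_on S U"
  shows "sqnorm S (matvec S U F) = sqnorm S F"
proof -
  have "complex_of_real (sqnorm S (matvec S U F))
      = (\<Sum>c\<in>local_cfgs S. (\<Sum>a\<in>local_cfgs S. cnj (U c a) * cnj (F a)) * (\<Sum>b\<in>local_cfgs S. U c b * F b))"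
    by (simp only: of_real_sqnorm matvec_def cnj_sum complex_cnj_mult)
  also have "\<dots> = (\<Sum>c\<in>local_cfgs S. \<Sum>a\<in>local_cfgs S. \<Sum>b\<in>local_cfgs S.
                    (cnj (F a) * F b) * (cnj (U c a) * U c b))"
    by (simp only: sum_product) (intro sum.cong refl; simp only: ac_simps)
  also have "\<dots> = (\<Sum>a\<in>local_cfgs S. \<Sum>b\<in>local_cfgs S. \<Sum>c\<in>local_cfgs S.
                    (cnj (F a) * F b) * (cnj (U c a) * U c b))"
    by (subst sum.swap) (rule sum.cong[OF refl], rule sum.swap)
  also have "\<dots> = (\<Sum>a\<in>local_cfgs S. \<Sum>b\<in>local_cfgs S.
                    (cnj (F a) * F b) * (\<Sum>c\<in>local_cfgs S. cnj (U c a) * U c b))"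
    by (simp only: sum_distrib_left)
  also have "\<dots> = (\<Sum>a\<in>local_cfgs S. \<Sum>b\<in>local_cfgs S. if b = a then cnj (F a) * F b else 0)"
    using U unfolding unitary_on_def by (intro sum.cong refl) auto
  also have "\<dots> = complex_of_real (sqnorm S F)"
    by (simp add: of_real_sqnorm finite_local_cfgs fin)
  finally show ?thesis using of_real_eq_iff by blast
qed

lemma norm_cnj_mult_le: "cmod (cnj a * b) \<le> ((cmod a)\<^sup>2 + (cmod b)\<^sup>2) / 2"
proof -
  have "0 \<le> (cmod a - cmod b)\<^sup>2" by simp
  then show ?thesis by (simp add: norm_mult power2_diff)
qed

lemma norm_cinner_on_le_1:
  assumes "sqnorm S A \<le> 1" "sqnorm S B \<le> 1"
  shows "cmod (cinner_on P S A B) \<le> 1"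
proof -
  have "cmod (cinner_on P S A B) \<le> (\<Sum>c\<in>local_cfgs S. cmod (if P c then cnj (A c) * B c else 0))"
    unfolding cinner_on_def by (rule norm_sum)
  also have "\<dots> \<le> (\<Sum>c\<in>local_cfgs S. ((cmod (A c))\<^sup>2 + (cmod (B c))\<^sup>2) / 2)"
    using norm_cnj_mult_le by (intro sum_mono) (simp add: add_nonneg_nonneg)
  also have "\<dots> = (sqnorm S A + sqnorm S B) / 2"
    unfolding sqnorm_def by (simp only: sum_divide_distrib[symmetric] sum.distrib)
  finally show ?thesis using assms by simp
qed

lemma norm_cinner_on_matvec_le_1:
  assumes "finite S" "unitary_on S U" "sqnorm S A \<le> 1" "sqnorm S B \<le> 1"
  shows "cmod (cinner_on P S (matvec S U A) (matvec S U B)) \<le> 1"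
  using assms by (intro norm_cinner_on_le_1) (simp_all add: sqnorm_matvec_unitary)

lemma apply_local_eq:
  assumes "S \<subseteq> {..<m}" "s \<in> cube m"
  shows "apply_local m S U v s
       = (\<Sum>c\<in>local_cfgs S. U (restr S s) c * v (\<lambda>i. if i \<in> S then c i else s i))"
proof -
  let ?f = "\<lambda>c i. if i \<in> S then c i else s i"
  let ?A = "{t\<in>cube m. \<forall>i. i \<notin> S \<longrightarrow> t i = s i}"
  have bij: "bij_betw ?f (local_cfgs S) ?A"
    by (rule bij_betw_byWitness[where f' = "restr S"])
       (use assms in \<open>auto simp: restr_def local_cfgs_iff cube_def restr_in_local_cfgs\<close>)
  have restr_f: "restr S (?f c) = c" if "c \<in> local_cfgs S" for c
    using that by (auto simp: restr_def local_cfgs_iff fun_eq_iff)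
  have "apply_local m S U v s = (\<Sum>c\<in>local_cfgs S. U (restr S s) (restr S (?f c)) * v (?f c))"
    unfolding apply_local_def
    using sum.reindex_bij_betw[OF bij, of "\<lambda>t. U (restr S s) (restr S t) * v t"] by simp
  also have "\<dots> = (\<Sum>c\<in>local_cfgs S. U (restr S s) c * v (?f c))"
    by (intro sum.cong refl) (simp add: restr_f)
  finally show ?thesis .
qed

lemma apply_local_join:
  assumes ST: "S \<inter> T = {}" "S \<union> T = {..<m}" and c: "c \<in> local_cfgs S" and d: "d \<in> local_cfgs T"
  shows "apply_local m S U v (join c d) = matvec S U (\<lambda>c'. v (join c' d)) c"
proof -
  have "join c d \<in> cube m"
    using join_in_local_cfgs[OF c d] ST by (simp add: cube_eq_local_cfgs)
  then have "apply_local m S U v (join c d)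
      = (\<Sum>c'\<in>local_cfgs S. U (restr S (join c d)) c' * v (\<lambda>i. if i \<in> S then c' i else join c d i))"
    using ST by (intro apply_local_eq) auto
  also have "\<dots> = (\<Sum>c'\<in>local_cfgs S. U c c' * v (join c' d))"
  proof (rule sum.cong[OF refl])
    fix c' assume c': "c' \<in> local_cfgs S"
    have "(\<lambda>i. if i \<in> S then c' i else join c d i) = join c' d"
      using c c' d ST unfolding join_def local_cfgs_iff fun_eq_iff by auto
    then show "U (restr S (join c d)) c' * v (\<lambda>i. if i \<in> S then c' i else join c d i)
        = U c c' * v (join c' d)"
      using restr_join_left[OF ST(1) c d] by simp
  qed
  finally show ?thesis unfolding matvec_def .
qed

lemma apply_local_product_sum:
  assumes ST: "S \<inter> T = {}" "S \<union> T = {..<m}" and s: "s \<in> cube m"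
    and v: "\<forall>s\<in>cube m. v s = (\<Sum>w<N. F w (restr S s) * G w (restr T s))"
  shows "apply_local m S U v s = (\<Sum>w<N. matvec S U (F w) (restr S s) * G w (restr T s))"
proof -
  define c d where "c = restr S s" and "d = restr T s"
  have cd: "c \<in> local_cfgs S" "d \<in> local_cfgs T" "s = join c d"
    using s ST unfolding c_def d_def
    by (auto simp: restr_in_local_cfgs join_restr cube_eq_local_cfgs)
  have v_join: "v (join c' d) = (\<Sum>w<N. F w c' * G w d)" if "c' \<in> local_cfgs S" for c'
    using join_in_local_cfgs[OF that cd(2)] v ST restr_join_left[OF ST(1) that cd(2)]
      restr_join_right[OF ST(1) that cd(2)]
    by (simp add: cube_eq_local_cfgs)
  have "apply_local m S U v s = (\<Sum>c'\<in>local_cfgs S. U c c' * (\<Sum>w<N. F w c' * G w d))"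
    unfolding cd(3) apply_local_join[OF ST cd(1,2)] matvec_def by (simp add: v_join)
  also have "\<dots> = (\<Sum>w<N. matvec S U (F w) c * G w d)"
    unfolding matvec_def sum_distrib_left sum_distrib_right
    by (subst sum.swap) (simp add: mult.assoc)
  finally show ?thesis unfolding c_def d_def .
qed

lemma sqnorm_apply_local:
  assumes ST: "S \<inter> T = {}" "S \<union> T = {..<m}" and U: "unitary_on S U"
  shows "sqnorm {..<m} (apply_local m S U v) = sqnorm {..<m} v"
proof -
  have fin: "finite S" using ST by (metis finite_Un finite_lessThan)
  have split: "sqnorm {..<m} h
      = (\<Sum>d\<in>local_cfgs T. sqnorm S (\<lambda>c. h (join c d)))" for h
    unfolding sqnorm_def cube_eq_local_cfgs[symmetric] sum_cube_split[OF ST] by (rule sum.swap)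
  show ?thesis
    unfolding split
    by (intro sum.cong refl)
       (simp add: apply_local_join[OF ST] sqnorm_def sqnorm_matvec_unitary[OF fin U, unfolded sqnorm_def])
qed

section \<open>Yao's product decomposition\<close>

definition product_decomp ::
    "nat \<Rightarrow> nat set \<Rightarrow> nat set \<Rightarrow> nat \<Rightarrow> (cfg \<Rightarrow> complex)
       \<Rightarrow> (nat \<Rightarrow> cfg \<Rightarrow> complex) \<Rightarrow> (nat \<Rightarrow> cfg \<Rightarrow> complex) \<Rightarrow> bool" where
  "product_decomp m A B N v F G \<longleftrightarrow>
     (\<forall>s\<in>cube m. v s = (\<Sum>w<N. F w (restr A s) * G w (restr B s))) \<and>
     (\<forall>w<N. sqnorm A (F w) \<le> 1) \<and> (\<forall>w<N. sqnorm B (G w) \<le> 1)"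

lemma product_decomp_swap: "product_decomp m A B N v F G \<longleftrightarrow> product_decomp m B A N v G F"
  unfolding product_decomp_def by (auto simp: mult.commute)

text \<open>The summands \<open>w < N\<close> and \<open>N \<le> w < 2 N\<close> of the doubled decomposition are the
  components in which the sent qubit \<open>q\<close> is \<open>0\<close> and \<open>1\<close> respectively.\<close>

definition sender_part :: "nat \<Rightarrow> nat \<Rightarrow> (nat \<Rightarrow> cfg \<Rightarrow> complex) \<Rightarrow> nat \<Rightarrow> cfg \<Rightarrow> complex" where
  "sender_part q N F w c = (if w < N then F w (c(q := False)) else F (w - N) (c(q := True)))"

definition receiver_part ::
    "nat set \<Rightarrow> nat \<Rightarrow> nat \<Rightarrow> (nat \<Rightarrow> cfg \<Rightarrow> complex) \<Rightarrow> nat \<Rightarrow> cfg \<Rightarrow> complex" where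
  "receiver_part B q N G w d =
     (if w < N then (if d q then 0 else G w (restr B d))
      else (if d q then G (w - N) (restr B d) else 0))"

lemma sum_lessThan_double: "(\<Sum>w<2 * (N::nat). h w) = (\<Sum>w<N. h w) + (\<Sum>w<N. h (w + N))"
proof -
  have "(\<Sum>w<2 * N. h w) = (\<Sum>w<N. h w) + (\<Sum>w\<in>{N..<N + N}. h w)"
    using sum.atLeastLessThan_concat[of 0 N "N + N" h] by (simp add: mult_2 atLeast0LessThan)
  also have "(\<Sum>w\<in>{N..<N + N}. h w) = (\<Sum>w<N. h (w + N))"
    by (metis sum.shift_bounds_nat_ivl add_0 atLeast0LessThan)
  finally show ?thesis .
qed

lemma product_sum_move_qubit:
  assumes "A \<inter> B = {}" "q \<in> A"
  shows "(\<Sum>w<N. F w (restr A s) * G w (restr B s))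
       = (\<Sum>w<2 * N. sender_part q N F w (restr (A - {q}) s) * receiver_part B q N G w (restr (insert q B) s))"
proof -
  have "restr B (restr (insert q B) s) = restr B s" "restr (insert q B) s q = s q"
    unfolding restr_def by auto
  moreover have "(restr (A - {q}) s)(q := s q) = restr A s"
    using assms unfolding restr_def fun_eq_iff by auto
  ultimately show ?thesis
    unfolding sum_lessThan_double sender_part_def receiver_part_def by (cases "s q") simp_all
qed

lemma sqnorm_sender_part:
  assumes q: "q \<in> A" and fin: "finite A" and F: "\<forall>w<N. sqnorm A (F w) \<le> 1" and w: "w < 2 * N"
  shows "sqnorm (A - {q}) (sender_part q N F w) \<le> 1"
proof -
  have restr_q: "c(q := False) = c" if "c \<in> local_cfgs (A - {q})" for c
    using that by (auto simp: local_cfgs_iff fun_eq_iff)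
  have split: "sqnorm A h = (\<Sum>c\<in>local_cfgs (A - {q}). (cmod (h c))\<^sup>2 + (cmod (h (c(q := True))))\<^sup>2)"
    for h using sqnorm_insert[of q "A - {q}" h] fin q by (simp add: insert_absorb)
  show ?thesis
  proof (cases "w < N")
    case True
    have "sqnorm (A - {q}) (sender_part q N F w) = (\<Sum>c\<in>local_cfgs (A - {q}). (cmod (F w c))\<^sup>2)"
      unfolding sqnorm_def sender_part_def using True by (intro sum.cong refl) (simp add: restr_q)
    also have "\<dots> \<le> sqnorm A (F w)" unfolding split by (intro sum_mono) simp
    finally show ?thesis using F True by force
  next
    case False
    have "sqnorm (A - {q}) (sender_part q N F w)
        = (\<Sum>c\<in>local_cfgs (A - {q}). (cmod (F (w - N) (c(q := True))))\<^sup>2)"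
      unfolding sqnorm_def sender_part_def using False by simp
    also have "\<dots> \<le> sqnorm A (F (w - N))" unfolding split by (intro sum_mono) simp
    also have "\<dots> \<le> 1" using F False w by simp
    finally show ?thesis .
  qed
qed

lemma sqnorm_receiver_part:
  assumes q: "q \<notin> B" and fin: "finite B" and G: "\<forall>w<N. sqnorm B (G w) \<le> 1" and w: "w < 2 * N"
  shows "sqnorm (insert q B) (receiver_part B q N G w) \<le> 1"
proof -
  have restr_upd: "restr B (d(q := True)) = d" and d_q: "\<not> d q" if "d \<in> local_cfgs B" for d
    using that q unfolding restr_def local_cfgs_iff fun_eq_iff by auto
  have "sqnorm (insert q B) (receiver_part B q N G w)
      = (if w < N then sqnorm B (G w) else sqnorm B (G (w - N)))"
    unfolding sqnorm_insert[OF q fin] unfolding sqnorm_def receiver_part_def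
    by (cases "w < N"; simp; intro sum.cong refl) (simp_all add: d_q restr_upd restr_eq_self)
  then show ?thesis using G w by auto
qed

lemma product_decomp_send:
  assumes AB: "A \<inter> B = {}" "A \<union> B = {..<m}" and q: "q \<in> A" and U: "unitary_on A U"
    and D: "product_decomp m A B N v F G"
  shows "product_decomp m (A - {q}) (insert q B) (2 * N) (apply_local m A U v)
           (sender_part q N (\<lambda>w. matvec A U (F w))) (receiver_part B q N G)"
proof -
  have fin: "finite A" "finite B" using AB(2) by (metis finite_Un finite_lessThan)+
  have qB: "q \<notin> B" using AB(1) q by auto
  have "apply_local m A U v s
      = (\<Sum>w<2 * N. sender_part q N (\<lambda>w. matvec A U (F w)) w (restr (A - {q}) s)
                    * receiver_part B q N G w (restr (insert q B) s))" if "s \<in> cube m" for s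
  proof -
    have "apply_local m A U v s = (\<Sum>w<N. matvec A U (F w) (restr A s) * G w (restr B s))"
      using D unfolding product_decomp_def by (intro apply_local_product_sum[OF AB that]) blast
    then show ?thesis using product_sum_move_qubit[OF AB(1) q, where F = "\<lambda>w. matvec A U (F w)"] by simp
  qed
  moreover have "sqnorm (A - {q}) (sender_part q N (\<lambda>w. matvec A U (F w)) w) \<le> 1" if "w < 2 * N" for w
    using D that unfolding product_decomp_def
    by (intro sqnorm_sender_part[OF q fin(1)]) (simp_all add: sqnorm_matvec_unitary[OF fin(1) U])
  moreover have "sqnorm (insert q B) (receiver_part B q N G w) \<le> 1" if "w < 2 * N" for w
    using D that unfolding product_decomp_def by (intro sqnorm_receiver_part[OF qB fin(2)]) auto
  ultimately show ?thesis unfolding product_decomp_def by blast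
qed

definition product_decomposable ::
    "nat \<Rightarrow> (nat \<Rightarrow> bool) \<Rightarrow> nat \<Rightarrow> (cfg \<Rightarrow> cfg \<Rightarrow> cfg \<Rightarrow> complex) \<Rightarrow> bool" where
  "product_decomposable m own N V \<longleftrightarrow>
     (\<exists>F G. \<forall>x y. product_decomp m (owned m own True) (owned m own False) N (V x y) (F x) (G y))"

lemma owned_disjoint: "owned m own p \<inter> owned m own (\<not> p) = {}"
  unfolding owned_def by auto

lemma owned_Un: "owned m own p \<union> owned m own (\<not> p) = {..<m}"
  unfolding owned_def by auto

lemma finite_owned: "finite (owned m own p)"
  unfolding owned_def by auto

lemma product_decomposable_round:
  assumes q: "q < m" "own q = p" and U: "unitary_on (owned m own p) U"
    and D: "product_decomposable m own N V"
  shows "product_decomposable m (own(q := \<not> p)) (2 * N)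
           (\<lambda>x y. apply_local m (owned m own p) U (V x y))"
proof -
  let ?A = "owned m own p" and ?B = "owned m own (\<not> p)"
  have qA: "q \<in> ?A" using q unfolding owned_def by auto
  have own': "owned m (own(q := \<not> p)) p = ?A - {q}" "owned m (own(q := \<not> p)) (\<not> p) = insert q ?B"
    using q unfolding owned_def by auto
  obtain F G where FG: "\<And>x y. product_decomp m (owned m own True) (owned m own False) N (V x y) (F x) (G y)"
    using D unfolding product_decomposable_def by blast
  show ?thesis
  proof (cases p)
    case True
    have "product_decomp m (?A - {q}) (insert q ?B) (2 * N) (apply_local m ?A U (V x y))
            (sender_part q N (\<lambda>w. matvec ?A U (F x w))) (receiver_part ?B q N (G y))" for x y
      using FG True by (intro product_decomp_send[OF owned_disjoint owned_Un qA U]) simp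
    then show ?thesis unfolding product_decomposable_def using own' True
      by (intro exI[of _ "\<lambda>x. sender_part q N (\<lambda>w. matvec ?A U (F x w))"]
          exI[of _ "\<lambda>y. receiver_part ?B q N (G y)"]) simp
  next
    case False
    have "product_decomp m (?A - {q}) (insert q ?B) (2 * N) (apply_local m ?A U (V x y))
            (sender_part q N (\<lambda>w. matvec ?A U (G y w))) (receiver_part ?B q N (F x))" for x y
      using FG False
      by (intro product_decomp_send[OF owned_disjoint owned_Un qA U]) (simp add: product_decomp_swap)
    then have "product_decomp m (owned m (own(q := \<not> p)) True) (owned m (own(q := \<not> p)) False)
        (2 * N) (apply_local m ?A U (V x y))
        (receiver_part ?B q N (F x)) (sender_part q N (\<lambda>w. matvec ?A U (G y w)))" for x y
      using own' False by (simp add: product_decomp_swap)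
    then show ?thesis unfolding product_decomposable_def
      by (intro exI[of _ "\<lambda>x. receiver_part ?B q N (F x)"]
          exI[of _ "\<lambda>y. sender_part q N (\<lambda>w. matvec ?A U (G y w))"]) simp
  qed
qed

lemma fst_run_indep: "fst (run m rs own v) = fst (run m rs own v')"
  by (induction rs arbitrary: own v v') auto

lemma product_decomposable_run:
  assumes "valid_rounds m rs own" "product_decomposable m own N V"
  shows "product_decomposable m (fst (run m rs own (\<lambda>_. 0))) (2 ^ length rs * N)
           (\<lambda>x y. snd (run m rs own (V x y)))"
  using assms
proof (induction rs arbitrary: own N V)
  case Nil
  then show ?case by simp
next
  case (Cons r rs)
  obtain p U q where r: "r = (p, U, q)" by (cases r)
  have valid: "valid_rounds m rs (own(q := \<not> p))" using Cons.prems(1) r by simp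
  have "product_decomposable m (own(q := \<not> p)) (2 * N)
          (\<lambda>x y. apply_local m (owned m own p) U (V x y))"
    using Cons.prems r by (intro product_decomposable_round) auto
  from Cons.IH[OF valid this] have "product_decomposable m (fst (run m rs (own(q := \<not> p)) (\<lambda>_. 0))) (2 ^ length rs * (2 * N))
      (\<lambda>x y. snd (run m rs (own(q := \<not> p)) (apply_local m (owned m own p) U (V x y))))" .
  moreover have "fst (run m (r # rs) own (\<lambda>_. 0)) = fst (run m rs (own(q := \<not> p)) (\<lambda>_. 0))"
    using r fst_run_indep by simp
  ultimately show ?case using r by (simp add: mult_ac)
qed

lemma init_basis_in_cube: "2 * n \<le> m \<Longrightarrow> init_basis n x y \<in> cube m"
  unfolding init_basis_def cube_def by auto

lemma cube_eq_iff_restr: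
  assumes "S \<inter> T = {}" "S \<union> T = {..<m}" "s \<in> cube m" "t \<in> cube m"
  shows "s = t \<longleftrightarrow> restr S s = restr S t \<and> restr T s = restr T t"
proof
  assume "restr S s = restr S t \<and> restr T s = restr T t"
  moreover have "join (restr S s) (restr T s) = s" "join (restr S t) (restr T t) = t"
    using assms join_restr by (auto simp: cube_eq_local_cfgs)
  ultimately show "s = t" by metis
qed simp

abbreviation init_vec :: "nat \<Rightarrow> cfg \<Rightarrow> cfg \<Rightarrow> cfg \<Rightarrow> complex" where
  "init_vec n x y \<equiv> (\<lambda>s. if s = init_basis n x y then 1 else 0)"

lemma product_decomp_init:
  assumes m: "2 * n \<le> m" and own: "\<forall>i<n. own i" "\<forall>i. n \<le> i \<and> i < 2 * n \<longrightarrow> \<not> own i"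
  shows "product_decomp m (owned m own True) (owned m own False) 1 (init_vec n x y)
           (\<lambda>_ c. if c = restr (owned m own True) (init_basis n x (\<lambda>_. False)) then 1 else 0)
           (\<lambda>_ d. if d = restr (owned m own False) (init_basis n (\<lambda>_. False) y) then 1 else 0)"
proof -
  let ?A = "owned m own True" and ?B = "owned m own False"
  have restr_init: "restr ?A (init_basis n x y) = restr ?A (init_basis n x (\<lambda>_. False))"
      "restr ?B (init_basis n x y) = restr ?B (init_basis n (\<lambda>_. False) y)"
    using own unfolding restr_def init_basis_def owned_def fun_eq_iff by auto
  have "s = init_basis n x y \<longleftrightarrow>
      restr ?A s = restr ?A (init_basis n x y) \<and> restr ?B s = restr ?B (init_basis n x y)"
    if "s \<in> cube m" for s
    using cube_eq_iff_restr[OF owned_disjoint[of m own True] owned_Un[of m own True]] that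
      init_basis_in_cube[OF m] by simp
  then show ?thesis
    unfolding product_decomp_def restr_init by (simp add: sqnorm_indicator finite_owned)
qed

lemma product_decomposable_init:
  assumes "2 * n \<le> m" "\<forall>i<n. own i" "\<forall>i. n \<le> i \<and> i < 2 * n \<longrightarrow> \<not> own i"
  shows "product_decomposable m own 1 (init_vec n)"
  unfolding product_decomposable_def
  by (intro exI[of _ "\<lambda>x _ c. if c = restr (owned m own True) (init_basis n x (\<lambda>_. False)) then 1 else 0"]
      exI[of _ "\<lambda>y _ d. if d = restr (owned m own False) (init_basis n (\<lambda>_. False) y) then 1 else 0"]
      allI product_decomp_init[OF assms])

section \<open>The acceptance probability as a bilinear form\<close>

lemma sum_quad_product:
  fixes f :: "'c \<Rightarrow> 'w \<Rightarrow> 'v \<Rightarrow> 'a::comm_semiring_0"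
  shows "(\<Sum>c\<in>C. \<Sum>d\<in>D. \<Sum>w\<in>W. \<Sum>w'\<in>W'. f c w w' * g d w w')
       = (\<Sum>w\<in>W. \<Sum>w'\<in>W'. (\<Sum>c\<in>C. f c w w') * (\<Sum>d\<in>D. g d w w'))"
proof -
  have "(\<Sum>c\<in>C. \<Sum>d\<in>D. \<Sum>w\<in>W. \<Sum>w'\<in>W'. f c w w' * g d w w')
      = (\<Sum>c\<in>C. \<Sum>w\<in>W. \<Sum>w'\<in>W'. \<Sum>d\<in>D. f c w w' * g d w w')"
    by (subst sum.swap) (simp only: sum.swap[of _ D W'])
  also have "\<dots> = (\<Sum>w\<in>W. \<Sum>w'\<in>W'. \<Sum>c\<in>C. \<Sum>d\<in>D. f c w w' * g d w w')"
    by (subst sum.swap) (simp only: sum.swap[of _ C W'])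
  finally show ?thesis by (simp only: sum_product)
qed

lemma sum_out_product_decomp:
  assumes ST: "S \<inter> T = {}" "S \<union> T = {..<m}" and out: "out \<in> S"
    and v: "\<forall>s\<in>cube m. v s = (\<Sum>w<N. A w (restr S s) * B w (restr T s))"
  shows "complex_of_real (\<Sum>s\<in>{s\<in>cube m. s out}. (cmod (v s))\<^sup>2)
       = (\<Sum>w<N. \<Sum>w'<N. cinner_on (\<lambda>c. c out) S (A w) (A w') * cinner_on (\<lambda>_. True) T (B w) (B w'))"
proof -
  have fin: "finite (cube m)" by (simp add: cube_eq_local_cfgs finite_local_cfgs)
  have "complex_of_real (\<Sum>s\<in>{s\<in>cube m. s out}. (cmod (v s))\<^sup>2)
      = (\<Sum>s\<in>cube m. if s out then cnj (v s) * v s else 0)"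
    unfolding of_real_sum sum.inter_filter[OF fin, symmetric]
    by (rule sum.cong[OF refl]) (subst complex_norm_square, simp add: mult.commute)
  also have "\<dots> = (\<Sum>c\<in>local_cfgs S. \<Sum>d\<in>local_cfgs T. \<Sum>w<N. \<Sum>w'<N.
        (if c out then cnj (A w c) * A w' c else 0) * (cnj (B w d) * B w' d))"
    unfolding sum_cube_split[OF ST]
  proof (intro sum.cong refl)
    fix c d assume c: "c \<in> local_cfgs S" and d: "d \<in> local_cfgs T"
    have "v (join c d) = (\<Sum>w<N. A w c * B w d)"
      using v join_in_local_cfgs[OF c d] ST restr_join_left[OF ST(1) c d] restr_join_right[OF ST(1) c d]
      by (simp add: cube_eq_local_cfgs)
    then have "cnj (v (join c d)) * v (join c d) = cnj (\<Sum>w<N. A w c * B w d) * (\<Sum>w<N. A w c * B w d)"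
      by simp
    also have "\<dots> = (\<Sum>w<N. \<Sum>w'<N. (cnj (A w c) * A w' c) * (cnj (B w d) * B w' d))"
      unfolding cnj_sum sum_product by (intro sum.cong refl) (simp add: mult_ac)
    finally have "cnj (v (join c d)) * v (join c d)
        = (\<Sum>w<N. \<Sum>w'<N. (cnj (A w c) * A w' c) * (cnj (B w d) * B w' d))" .
    moreover have "join c d out = c out"
      using d out ST unfolding join_def local_cfgs_iff by auto
    ultimately show "(if join c d out then cnj (v (join c d)) * v (join c d) else 0)
        = (\<Sum>w<N. \<Sum>w'<N. (if c out then cnj (A w c) * A w' c else 0) * (cnj (B w d) * B w' d))"
      by simp
  qed
  also have "\<dots> = (\<Sum>w<N. \<Sum>w'<N. cinner_on (\<lambda>c. c out) S (A w) (A w')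
                                    * cinner_on (\<lambda>_. True) T (B w) (B w'))"
    unfolding cinner_on_def by (simp only: sum_quad_product if_True)
  finally show ?thesis .
qed

lemma final_state_eq:
  "final_state n P x y = apply_local (nqubits P)
     (owned (nqubits P) (fst (run (nqubits P) (rounds P) (owner0 P) (\<lambda>_. 0))) (fin_player P))
     (fin_unitary P) (snd (run (nqubits P) (rounds P) (owner0 P) (init_vec n x y)))"
  unfolding final_state_def Let_def
  by (simp add: split_beta fst_run_indep[of _ _ _ "init_vec n x y" "\<lambda>_. 0"])

lemma accept_prob_eq_cinner_sum:
  fixes P :: protocol
  defines "m \<equiv> nqubits P"
  defines "own' \<equiv> fst (run m (rounds P) (owner0 P) (\<lambda>_. 0))"
  defines "S \<equiv> owned m own' (fin_player P)" and "T \<equiv> owned m own' (\<not> fin_player P)"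
  assumes P: "valid_protocol n P"
    and D: "product_decomp m S T N (snd (run m (rounds P) (owner0 P) (init_vec n x y))) Aw Bw"
  shows "complex_of_real (accept_prob n P x y) =
    (\<Sum>w<N. \<Sum>w'<N.
       cinner_on (\<lambda>c. c (out_qubit P)) S (matvec S (fin_unitary P) (Aw w)) (matvec S (fin_unitary P) (Aw w'))
       * cinner_on (\<lambda>_. True) T (Bw w) (Bw w'))"
proof -
  have ST: "S \<inter> T = {}" "S \<union> T = {..<m}"
    unfolding S_def T_def by (rule owned_disjoint, rule owned_Un)
  have "out_qubit P \<in> S"
    using P unfolding valid_protocol_def Let_def S_def owned_def own'_def m_def by auto
  moreover have "\<forall>s\<in>cube m. final_state n P x y s
      = (\<Sum>w<N. matvec S (fin_unitary P) (Aw w) (restr S s) * Bw w (restr T s))"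
  proof
    fix s assume s: "s \<in> cube m"
    have "final_state n P x y s
        = apply_local m S (fin_unitary P) (snd (run m (rounds P) (owner0 P) (init_vec n x y))) s"
      unfolding final_state_eq S_def own'_def m_def ..
    also have "\<dots> = (\<Sum>w<N. matvec S (fin_unitary P) (Aw w) (restr S s) * Bw w (restr T s))"
      using D unfolding product_decomp_def by (intro apply_local_product_sum[OF ST s]) blast
    finally show "final_state n P x y s
        = (\<Sum>w<N. matvec S (fin_unitary P) (Aw w) (restr S s) * Bw w (restr T s))" .
  qed
  ultimately show ?thesis
    unfolding accept_prob_def m_def[symmetric] by (rule sum_out_product_decomp[OF ST])
qed

lemma sqnorm_run:
  "valid_rounds m rs own \<Longrightarrow> sqnorm {..<m} (snd (run m rs own v)) = sqnorm {..<m} v"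
proof (induction rs arbitrary: own v)
  case (Cons r rs)
  obtain p U q where r: "r = (p, U, q)" by (cases r)
  have valid: "valid_rounds m rs (own(q := \<not> p))" "unitary_on (owned m own p) U"
    using Cons.prems r by auto
  have "snd (run m (r # rs) own v) = snd (run m rs (own(q := \<not> p)) (apply_local m (owned m own p) U v))"
    using r by simp
  then have "sqnorm {..<m} (snd (run m (r # rs) own v))
      = sqnorm {..<m} (apply_local m (owned m own p) U v)"
    by (simp only: Cons.IH[OF valid(1)])
  also have "\<dots> = sqnorm {..<m} v"
    by (rule sqnorm_apply_local[OF owned_disjoint owned_Un valid(2)])
  finally show ?case .
qed simp

lemma accept_prob_nonneg: "0 \<le> accept_prob n P x y"
  unfolding accept_prob_def by (simp add: sum_nonneg)

lemma accept_prob_le_1: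
  assumes P: "valid_protocol n P"
  shows "accept_prob n P x y \<le> 1"
proof -
  let ?m = "nqubits P" and ?own' = "fst (run (nqubits P) (rounds P) (owner0 P) (\<lambda>_. 0))"
  have valid: "2 * n \<le> ?m" "valid_rounds ?m (rounds P) (owner0 P)"
      "unitary_on (owned ?m ?own' (fin_player P)) (fin_unitary P)"
    using P unfolding valid_protocol_def Let_def by auto
  have "accept_prob n P x y \<le> sqnorm {..<?m} (final_state n P x y)"
    unfolding accept_prob_def sqnorm_def cube_eq_local_cfgs
    by (rule sum_mono2) (auto simp: finite_local_cfgs)
  also have "\<dots> = sqnorm {..<?m} (init_vec n x y)"
    unfolding final_state_eq sqnorm_apply_local[OF owned_disjoint owned_Un valid(3)] sqnorm_run[OF valid(2)] ..
  also have "\<dots> = 1"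
    using init_basis_in_cube[OF valid(1)] by (simp add: sqnorm_indicator cube_eq_local_cfgs)
  finally show ?thesis .
qed

lemma product_decomposable_protocol:
  assumes "valid_protocol n P"
  defines "m \<equiv> nqubits P"
  shows "product_decomposable m (fst (run m (rounds P) (owner0 P) (\<lambda>_. 0))) (2 ^ length (rounds P))
           (\<lambda>x y. snd (run m (rounds P) (owner0 P) (init_vec n x y)))"
proof -
  have init: "2 * n \<le> m" "\<forall>i<n. owner0 P i" "\<forall>i. n \<le> i \<and> i < 2 * n \<longrightarrow> \<not> owner0 P i"
    and valid: "valid_rounds m (rounds P) (owner0 P)"
    using assms unfolding valid_protocol_def Let_def by auto
  show ?thesis using product_decomposable_run[OF valid product_decomposable_init[OF init]] by simp
qed

lemma accept_prob_bilinear: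
  assumes P: "valid_protocol n P"
  defines "N \<equiv> (2::nat) ^ length (rounds P)"
  shows "\<exists>a b. (\<forall>x y. accept_prob n P x y = Re (\<Sum>w<N. \<Sum>w'<N. a x w w' * b y w w'))
     \<and> (\<forall>x. \<forall>w<N. \<forall>w'<N. cmod (a x w w') \<le> 1) \<and> (\<forall>y. \<forall>w<N. \<forall>w'<N. cmod (b y w w') \<le> 1)"
proof -
  define m where "m = nqubits P"
  define own' where "own' = fst (run m (rounds P) (owner0 P) (\<lambda>_. 0))"
  define S where "S = owned m own' (fin_player P)"
  define T where "T = owned m own' (\<not> fin_player P)"
  have U: "unitary_on S (fin_unitary P)"
    using P unfolding valid_protocol_def Let_def m_def S_def own'_def by auto
  obtain F G where FG: "\<And>x y. product_decomp m (owned m own' True) (owned m own' False) N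
      (snd (run m (rounds P) (owner0 P) (init_vec n x y))) (F x) (G y)"
    using product_decomposable_protocol[OF P]
    unfolding product_decomposable_def own'_def N_def m_def by auto
  define \<alpha> where "\<alpha> Av w w' = cinner_on (\<lambda>c. c (out_qubit P)) S
      (matvec S (fin_unitary P) (Av w)) (matvec S (fin_unitary P) (Av w'))"
    for Av :: "nat \<Rightarrow> cfg \<Rightarrow> complex" and w w' :: nat
  define \<beta> where "\<beta> Bv w w' = cinner_on (\<lambda>_. True) T (Bv w) (Bv w')"
    for Bv :: "nat \<Rightarrow> cfg \<Rightarrow> complex" and w w' :: nat
  define a where "a x = (if fin_player P then \<alpha> (F x) else \<beta> (F x))" for x
  define b where "b y = (if fin_player P then \<beta> (G y) else \<alpha> (G y))" for y
  have "complex_of_real (accept_prob n P x y) = (\<Sum>w<N. \<Sum>w'<N. a x w w' * b y w w')" for x y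
  proof (cases "fin_player P")
    case True
    then show ?thesis
      using accept_prob_eq_cinner_sum[OF P, of N x y "F x" "G y"] FG[of x y]
      unfolding a_def b_def \<alpha>_def \<beta>_def S_def T_def own'_def m_def by simp
  next
    case False
    then show ?thesis
      using accept_prob_eq_cinner_sum[OF P, of N x y "G y" "F x"] FG[of x y]
      unfolding a_def b_def \<alpha>_def \<beta>_def S_def T_def own'_def m_def
      by (simp add: product_decomp_swap mult.commute)
  qed
  then have "accept_prob n P x y = Re (\<Sum>w<N. \<Sum>w'<N. a x w w' * b y w w')" for x y
    by (metis Re_complex_of_real)
  moreover have "cmod (a x w w') \<le> 1" "cmod (b y w w') \<le> 1" if "w < N" "w' < N" for x y w w'
    using FG[of x y] that norm_cinner_on_matvec_le_1[OF finite_owned U[unfolded S_def]]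
      norm_cinner_on_le_1[of T]
    unfolding a_def b_def \<alpha>_def \<beta>_def product_decomp_def S_def T_def
    by (cases "fin_player P"; simp)+
  ultimately show ?thesis by blast
qed

lemma accept_prob_no_rounds:
  assumes P: "valid_protocol n P" and no_rounds: "rounds P = []"
  shows "(\<forall>x y y'. accept_prob n P x y = accept_prob n P x y') \<or>
         (\<forall>x x' y. accept_prob n P x y = accept_prob n P x' y)"
proof -
  define m where "m = nqubits P"
  define A B where "A = owned m (owner0 P) True" and "B = owned m (owner0 P) False"
  define F where "F x (w::nat) c = (if c = restr A (init_basis n x (\<lambda>_. False)) then 1 else 0 :: complex)" for x w c
  define G where "G y (w::nat) d = (if d = restr B (init_basis n (\<lambda>_. False) y) then 1 else 0 :: complex)" for y w d
  have valid: "2 * n \<le> m" "\<forall>i<n. owner0 P i" "\<forall>i. n \<le> i \<and> i < 2 * n \<longrightarrow> \<not> owner0 P i"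
    using P unfolding valid_protocol_def Let_def m_def by auto
  have D: "product_decomp m A B 1 (snd (run m (rounds P) (owner0 P) (init_vec n x y))) (F x) (G y)" for x y
    using product_decomp_init[OF valid] unfolding no_rounds A_def B_def F_def G_def by simp
  have norm1: "cinner_on (\<lambda>_. True) A (F x 0) (F x 0) = 1" "cinner_on (\<lambda>_. True) B (G y 0) (G y 0) = 1"
    for x y
    unfolding cinner_on_self F_def G_def A_def B_def
    by (simp_all add: sqnorm_indicator finite_owned restr_in_local_cfgs)
  let ?acc = "\<lambda>S v. cinner_on (\<lambda>c. c (out_qubit P)) S (matvec S (fin_unitary P) v) (matvec S (fin_unitary P) v)"
  show ?thesis
  proof (cases "fin_player P")
    case True
    have "complex_of_real (accept_prob n P x y) = ?acc A (F x 0)" for x y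
      using accept_prob_eq_cinner_sum[OF P, of 1 x y "F x" "G y"] D[of x y] norm1 True
      unfolding no_rounds A_def B_def m_def by simp
    then show ?thesis by (metis of_real_eq_iff)
  next
    case False
    have "complex_of_real (accept_prob n P x y) = ?acc B (G y 0)" for x y
      using accept_prob_eq_cinner_sum[OF P, of 1 x y "G y" "F x"] product_decomp_swap[THEN iffD1, OF D[of x y]]
        norm1 False
      unfolding no_rounds A_def B_def m_def by simp
    then show ?thesis by (metis of_real_eq_iff)
  qed
qed

section \<open>Nuclear norm and amplification\<close>

text \<open>\<open>nu_le W H\<close> says that \<open>H\<close> is a combination \<open>\<Sum> c\<^sub>i a\<^sub>i x b\<^sub>i y\<close> of rank-one matrices
  with entries of modulus at most \<open>1\<close> and \<open>\<Sum> \<bar>c\<^sub>i\<bar> \<le> W\<close>, i.e. that the nuclear norm \<open>\<nu>(H)\<close>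
  is at most \<open>W\<close>.\<close>

inductive nu_le :: "real \<Rightarrow> ('x \<Rightarrow> 'y \<Rightarrow> real) \<Rightarrow> bool" where
  rank1: "(\<forall>x. \<bar>a x\<bar> \<le> 1) \<Longrightarrow> (\<forall>y. \<bar>b y\<bar> \<le> 1) \<Longrightarrow> nu_le 1 (\<lambda>x y. a x * b y)"
| scale: "nu_le W H \<Longrightarrow> nu_le (\<bar>c\<bar> * W) (\<lambda>x y. c * H x y)"
| add: "nu_le W1 H1 \<Longrightarrow> nu_le W2 H2 \<Longrightarrow> nu_le (W1 + W2) (\<lambda>x y. H1 x y + H2 x y)"
| zero: "nu_le 0 (\<lambda>x y. 0)"
| mono: "nu_le W H \<Longrightarrow> W \<le> W' \<Longrightarrow> nu_le W' H"

lemma nu_le_nonneg: "nu_le W H \<Longrightarrow> 0 \<le> W"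
  by (induction rule: nu_le.induct) auto

lemma nu_le_one: "nu_le 1 (\<lambda>x y. 1)"
  using nu_le.rank1[of "\<lambda>_. 1" "\<lambda>_. 1"] by simp

lemma nu_le_diff: "nu_le W1 H1 \<Longrightarrow> nu_le W2 H2 \<Longrightarrow> nu_le (W1 + W2) (\<lambda>x y. H1 x y - H2 x y)"
  using nu_le.add[of W1 H1 "\<bar>-1\<bar> * W2" "\<lambda>x y. -1 * H2 x y"] nu_le.scale[of W2 H2 "-1"] by simp

lemma nu_le_sum:
  "finite I \<Longrightarrow> (\<And>i. i \<in> I \<Longrightarrow> nu_le (W i) (H i)) \<Longrightarrow> nu_le (\<Sum>i\<in>I. W i) (\<lambda>x y. \<Sum>i\<in>I. H i x y)"
proof (induction rule: finite_induct)
  case empty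
  then show ?case using nu_le.zero by simp
next
  case (insert i I)
  then show ?case using nu_le.add[of "W i" "H i" "\<Sum>i\<in>I. W i" "\<lambda>x y. \<Sum>i\<in>I. H i x y"] by simp
qed

lemma nu_le_compose: "nu_le W H \<Longrightarrow> nu_le W (\<lambda>u v. H (\<phi> u) (\<psi> v))"
proof (induction rule: nu_le.induct)
  case (rank1 a b)
  then show ?case using nu_le.rank1[of "a \<circ> \<phi>" "b \<circ> \<psi>"] by simp
qed (auto intro: nu_le.intros)

lemma nu_le_mult_rank1:
  assumes "nu_le W H" "\<forall>x. \<bar>a x\<bar> \<le> 1" "\<forall>y. \<bar>b y\<bar> \<le> 1"
  shows "nu_le W (\<lambda>x y. (a x * b y) * H x y)"
  using assms
proof (induction rule: nu_le.induct)
  case (rank1 a' b')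
  have "nu_le 1 (\<lambda>x y. (a x * a' x) * (b y * b' y))"
    using rank1 by (intro nu_le.rank1) (auto simp: abs_mult intro: mult_le_one)
  then show ?case by (simp add: mult_ac)
next
  case (scale W H c)
  then have "nu_le (\<bar>c\<bar> * W) (\<lambda>x y. c * ((a x * b y) * H x y))" by (intro nu_le.scale) auto
  then show ?case by (simp add: mult_ac)
next
  case (add W1 H1 W2 H2)
  then have "nu_le (W1 + W2) (\<lambda>x y. (a x * b y) * H1 x y + (a x * b y) * H2 x y)"
    by (intro nu_le.add) auto
  then show ?case by (simp add: distrib_left)
qed (auto intro: nu_le.intros)

lemma nu_le_mult:
  assumes "nu_le W1 H1" "nu_le W2 H2"
  shows "nu_le (W1 * W2) (\<lambda>x y. H1 x y * H2 x y)"
  using assms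
proof (induction rule: nu_le.induct)
  case (rank1 a b)
  then show ?case using nu_le_mult_rank1[OF rank1(3) rank1(1,2)] by simp
next
  case (scale W H c)
  then have "nu_le (\<bar>c\<bar> * (W * W2)) (\<lambda>x y. c * (H x y * H2 x y))" by (intro nu_le.scale) auto
  then show ?case by (simp add: mult_ac)
next
  case (add W1 H1 W1' H1')
  then have "nu_le (W1 * W2 + W1' * W2) (\<lambda>x y. H1 x y * H2 x y + H1' x y * H2 x y)"
    by (intro nu_le.add) auto
  then show ?case by (simp add: distrib_right)
next
  case zero
  then show ?case using nu_le.zero by simp
next
  case (mono W H W')
  have "W * W2 \<le> W' * W2" using mono nu_le_nonneg[OF mono(4)] by (intro mult_right_mono) auto
  then show ?case using mono nu_le.mono by blast
qed

lemma nu_le_power: "nu_le W H \<Longrightarrow> nu_le (W ^ j) (\<lambda>x y. H x y ^ j)"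
  by (induction j) (simp_all add: nu_le_one nu_le_mult)

lemma nu_le_Re_bilinear:
  fixes a :: "'x \<Rightarrow> nat \<Rightarrow> nat \<Rightarrow> complex" and b :: "'y \<Rightarrow> nat \<Rightarrow> nat \<Rightarrow> complex"
  assumes "\<forall>x. \<forall>w<N. \<forall>w'<N. cmod (a x w w') \<le> 1" "\<forall>y. \<forall>w<N. \<forall>w'<N. cmod (b y w w') \<le> 1"
  shows "nu_le (2 * real N * real N) (\<lambda>x y. Re (\<Sum>w<N. \<Sum>w'<N. a x w w' * b y w w'))"
proof -
  have "nu_le 2 (\<lambda>x y. Re (a x w w' * b y w w'))" if "w < N" "w' < N" for w w'
  proof -
    have "nu_le 1 (\<lambda>x y. Re (a x w w') * Re (b y w w'))" "nu_le 1 (\<lambda>x y. Im (a x w w') * Im (b y w w'))"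
      using assms that
      by (auto intro!: nu_le.rank1 intro: order_trans[OF abs_Re_le_cmod] order_trans[OF abs_Im_le_cmod])
    from nu_le_diff[OF this] show ?thesis by simp
  qed
  then have "nu_le (\<Sum>w<N. \<Sum>w'<N. 2) (\<lambda>x y. \<Sum>w<N. \<Sum>w'<N. Re (a x w w' * b y w w'))"
    by (intro nu_le_sum) auto
  then show ?thesis by (simp add: mult_ac)
qed

lemma nu_le_accept_prob:
  assumes "valid_protocol n P"
  shows "nu_le (2 * 4 ^ length (rounds P)) (accept_prob n P)"
proof -
  define N where "N = (2::nat) ^ length (rounds P)"
  obtain a b where ab: "\<And>x y. accept_prob n P x y = Re (\<Sum>w<N. \<Sum>w'<N. a x w w' * b y w w')"
      "\<forall>x. \<forall>w<N. \<forall>w'<N. cmod (a x w w') \<le> 1" "\<forall>y. \<forall>w<N. \<forall>w'<N. cmod (b y w w') \<le> 1"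
    using accept_prob_bilinear[OF assms] unfolding N_def by blast
  have acc: "accept_prob n P = (\<lambda>x y. Re (\<Sum>w<N. \<Sum>w'<N. a x w w' * b y w w'))"
    using ab(1) by blast
  have W: "2 * real N * real N = 2 * 4 ^ length (rounds P)"
    unfolding N_def by (simp add: power_mult_distrib[symmetric])
  show ?thesis using nu_le_Re_bilinear[OF ab(2,3)] unfolding acc W .
qed

definition amplify :: "nat \<Rightarrow> real \<Rightarrow> real" where
  "amplify e p = (\<Sum>i\<in>{e<..2 * e}. real (2 * e choose i) * p ^ i * (1 - p) ^ (2 * e - i))"

lemma sum_choose_le_4_power: "I \<subseteq> {..2 * e} \<Longrightarrow> (\<Sum>i\<in>I. real (2 * e choose i)) \<le> 4 ^ e"
proof -
  assume "I \<subseteq> {..2 * e}"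
  then have "(\<Sum>i\<in>I. real (2 * e choose i)) \<le> (\<Sum>i\<le>2 * e. real (2 * e choose i))"
    by (intro sum_mono2) auto
  also have "\<dots> = 4 ^ e"
    using choose_row_sum[of "2 * e"] by (simp flip: of_nat_sum add: power_mult)
  finally show ?thesis .
qed

lemma nu_le_amplify:
  assumes "nu_le W H"
  shows "nu_le (4 ^ e * (1 + W) ^ (2 * e)) (\<lambda>x y. amplify e (H x y))"
proof -
  have W: "0 \<le> W" by (rule nu_le_nonneg[OF assms])
  have summand: "nu_le (real (2 * e choose i) * (1 + W) ^ (2 * e))
      (\<lambda>x y. real (2 * e choose i) * H x y ^ i * (1 - H x y) ^ (2 * e - i))"
    if i: "i \<in> {e<..2 * e}" for i
  proof -
    have d: "nu_le (W ^ i * (1 + W) ^ (2 * e - i)) (\<lambda>x y. H x y ^ i * (1 - H x y) ^ (2 * e - i))"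
      by (intro nu_le_mult nu_le_power assms nu_le_diff[OF nu_le_one])
    have "W ^ i * (1 + W) ^ (2 * e - i) \<le> (1 + W) ^ i * (1 + W) ^ (2 * e - i)"
      using W by (intro mult_right_mono power_mono) auto
    also have "\<dots> = (1 + W) ^ (2 * e)"
      using i by (simp flip: power_add)
    finally have "nu_le ((1 + W) ^ (2 * e)) (\<lambda>x y. H x y ^ i * (1 - H x y) ^ (2 * e - i))"
      by (rule nu_le.mono[OF d])
    from nu_le.scale[OF this, of "real (2 * e choose i)"] show ?thesis by (simp add: mult.assoc)
  qed
  have "(\<Sum>i\<in>{e<..2 * e}. real (2 * e choose i) * (1 + W) ^ (2 * e)) \<le> 4 ^ e * (1 + W) ^ (2 * e)"
    unfolding sum_distrib_right[symmetric] using W by (intro mult_right_mono sum_choose_le_4_power) auto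
  moreover have "nu_le (\<Sum>i\<in>{e<..2 * e}. real (2 * e choose i) * (1 + W) ^ (2 * e))
      (\<lambda>x y. \<Sum>i\<in>{e<..2 * e}. real (2 * e choose i) * H x y ^ i * (1 - H x y) ^ (2 * e - i))"
    by (rule nu_le_sum) (simp_all add: summand)
  ultimately show ?thesis
    unfolding amplify_def by (blast intro: nu_le.mono)
qed

lemma power_mult_power_le:
  fixes p q :: real
  assumes "0 \<le> p" "p \<le> q" "e \<le> i" "i \<le> 2 * e"
  shows "p ^ i * q ^ (2 * e - i) \<le> (p * q) ^ e"
proof -
  have "p ^ i * q ^ (2 * e - i) = p ^ e * (p ^ (i - e) * q ^ (2 * e - i))"
    using assms(3) by (simp add: mult.assoc flip: power_add)
  also have "\<dots> \<le> p ^ e * (q ^ (i - e) * q ^ (2 * e - i))"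
    using assms by (intro mult_left_mono mult_right_mono power_mono) auto
  also have "\<dots> = (p * q) ^ e"
    using assms(3,4) by (simp add: power_mult_distrib flip: power_add)
  finally show ?thesis .
qed

lemma sum_binomial_terms_le:
  fixes p q :: real
  assumes "I \<subseteq> {..2 * e}" "0 \<le> p" "0 \<le> q" "p * q \<le> 2 / 9"
    and "\<And>i. i \<in> I \<Longrightarrow> p ^ i * q ^ (2 * e - i) \<le> (p * q) ^ e"
  shows "(\<Sum>i\<in>I. real (2 * e choose i) * p ^ i * q ^ (2 * e - i)) \<le> (8 / 9) ^ e"
proof -
  have "(\<Sum>i\<in>I. real (2 * e choose i) * p ^ i * q ^ (2 * e - i)) \<le> (\<Sum>i\<in>I. real (2 * e choose i) * (p * q) ^ e)"
    using assms(5) by (intro sum_mono) (simp add: mult.assoc mult_left_mono)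
  also have "\<dots> = (\<Sum>i\<in>I. real (2 * e choose i)) * (p * q) ^ e"
    by (simp add: sum_distrib_right)
  also have "\<dots> \<le> 4 ^ e * (2 / 9) ^ e"
    using assms by (intro mult_mono sum_choose_le_4_power power_mono) auto
  finally show ?thesis by (simp flip: power_mult_distrib)
qed

lemma mult_one_minus_le: "(p::real) \<le> 1 / 3 \<or> 2 / 3 \<le> p \<Longrightarrow> p * (1 - p) \<le> 2 / 9"
proof -
  assume "p \<le> 1 / 3 \<or> 2 / 3 \<le> p"
  then have "0 \<le> (3 * p - 1) * (3 * p - 2)"
    by (auto intro: mult_nonpos_nonpos mult_nonneg_nonneg)
  then show ?thesis by (simp add: algebra_simps)
qed

lemma amplify_le:
  assumes "0 \<le> p" "p \<le> 1 / 3"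
  shows "amplify e p \<le> (8 / 9) ^ e"
  unfolding amplify_def
  using assms mult_one_minus_le[of p]
  by (intro sum_binomial_terms_le power_mult_power_le) auto

lemma one_minus_amplify:
  "1 - amplify e p = (\<Sum>i\<le>e. real (2 * e choose i) * p ^ i * (1 - p) ^ (2 * e - i))"
proof -
  have "(\<Sum>i\<le>2 * e. real (2 * e choose i) * p ^ i * (1 - p) ^ (2 * e - i)) = 1"
    using binomial_ring[of p "1 - p" "2 * e"] by simp
  moreover have "{..2 * e} = {..e} \<union> {e<..2 * e}" by auto
  moreover have "(\<Sum>i\<in>{..e} \<union> {e<..2 * e}. real (2 * e choose i) * p ^ i * (1 - p) ^ (2 * e - i))
      = (\<Sum>i\<le>e. real (2 * e choose i) * p ^ i * (1 - p) ^ (2 * e - i)) + amplify e p"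
    unfolding amplify_def by (rule sum.union_disjoint) auto
  ultimately show ?thesis by simp
qed

lemma amplify_bounds:
  assumes "0 \<le> p" "p \<le> 1"
  shows "0 \<le> amplify e p" "amplify e p \<le> 1"
proof -
  show "0 \<le> amplify e p" unfolding amplify_def using assms by (intro sum_nonneg) auto
  have "0 \<le> 1 - amplify e p" unfolding one_minus_amplify using assms by (intro sum_nonneg) auto
  then show "amplify e p \<le> 1" by simp
qed

lemma one_minus_amplify_le:
  assumes "2 / 3 \<le> p" "p \<le> 1"
  shows "1 - amplify e p \<le> (8 / 9) ^ e"
  unfolding one_minus_amplify
proof (intro sum_binomial_terms_le)
  fix i assume i: "i \<in> {..e}"
  then have "(1 - p) ^ (2 * e - i) * p ^ (2 * e - (2 * e - i)) \<le> ((1 - p) * p) ^ e"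
    using assms by (intro power_mult_power_le) auto
  then show "p ^ i * (1 - p) ^ (2 * e - i) \<le> (p * (1 - p)) ^ e"
    using i by (simp add: mult.commute)
qed (use assms mult_one_minus_le[of p] in auto)

lemma amplify_accept_prob_approx:
  assumes "valid_protocol n P" "computes n f P" "x \<in> cube n" "y \<in> cube n"
  shows "\<bar>(if f x y then 1 else 0) - amplify e (accept_prob n P x y)\<bar> \<le> (8 / 9) ^ e"
proof -
  have p: "0 \<le> accept_prob n P x y" "accept_prob n P x y \<le> 1"
    using accept_prob_nonneg accept_prob_le_1[OF assms(1)] by auto
  have "if f x y then 2 / 3 \<le> accept_prob n P x y else accept_prob n P x y \<le> 1 / 3"
    using assms(2-4) unfolding computes_def by blast
  then show ?thesis
    using amplify_bounds[OF p] amplify_le[OF p(1)] one_minus_amplify_le[OF _ p(2)]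
    by (cases "f x y") auto
qed

section \<open>The dual witness of the pattern matrix\<close>

definition chi :: "nat set \<Rightarrow> cfg \<Rightarrow> real" where
  "chi Z w = (-1) ^ card {i\<in>Z. w i}"

lemma chi_eq_prod: "finite Z \<Longrightarrow> chi Z w = (\<Prod>i\<in>Z. if w i then -1 else 1)"
  unfolding chi_def by (simp add: prod.If_cases Int_def)

lemma sum_chi_eq_0:
  assumes "finite Z" "Z \<noteq> {}"
  shows "(\<Sum>w\<in>local_cfgs Z. chi Z w) = 0"
  using assms sum_prod_local_cfgs[OF assms(1), of "\<lambda>_ a. if a then -1 else 1 :: real"]
  by (simp add: chi_eq_prod card_gt_0_iff)

text \<open>\<open>Psi Z\<close> is the dual witness of the pattern-matrix method; \<open>Mu Z\<close> is the weight of the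
  Cauchy-Schwarz step that bounds its discrepancy, and \<open>kappa1\<close> the resulting kernel.\<close>

definition psi1 :: "bool \<Rightarrow> bool \<Rightarrow> real" where
  "psi1 a b = (if a \<and> b then -1/2 else 1/6)"

definition Psi :: "nat set \<Rightarrow> cfg \<Rightarrow> cfg \<Rightarrow> real" where
  "Psi Z u v = (\<Prod>i\<in>Z. psi1 (u i) (v i))"

definition mu1 :: "bool \<Rightarrow> real" where
  "mu1 a = (if a then 2/3 else 1/3)"

definition Mu :: "nat set \<Rightarrow> cfg \<Rightarrow> real" where
  "Mu Z u = (\<Prod>i\<in>Z. mu1 (u i))"

definition kappa1 :: "bool \<Rightarrow> bool \<Rightarrow> real" where
  "kappa1 b b' = psi1 False b * psi1 False b' / mu1 False + psi1 True b * psi1 True b' / mu1 True"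

lemma Psi_mult_and_eq_sum:
  assumes fin: "finite Z" and u: "u \<in> local_cfgs Z"
  shows "Psi Z u v * G (\<lambda>i. u i \<and> v i) = (\<Sum>w\<in>local_cfgs Z.
           G w * (\<Prod>i\<in>Z. psi1 (u i) (v i) * (if (u i \<and> v i) = w i then 1 else 0)))"
proof -
  have prod_indicator: "(\<Prod>i\<in>Z. if P i then 1 else 0) = (if \<forall>i\<in>Z. P i then 1 else (0::real))" for P
    using fin by (auto simp: prod_zero_iff intro: prod.neutral)
  have and_eq_iff: "(\<lambda>i. u i \<and> v i) = w \<longleftrightarrow> (\<forall>i\<in>Z. (u i \<and> v i) = w i)" if "w \<in> local_cfgs Z" for w
    using u that by (auto simp: local_cfgs_iff fun_eq_iff)
  have "(\<Sum>w\<in>local_cfgs Z. G w * (\<Prod>i\<in>Z. psi1 (u i) (v i) * (if (u i \<and> v i) = w i then 1 else 0)))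
      = (\<Sum>w\<in>local_cfgs Z. if (\<lambda>i. u i \<and> v i) = w then G w * Psi Z u v else 0)"
    by (intro sum.cong refl) (simp add: prod.distrib Psi_def prod_indicator and_eq_iff)
  also have "\<dots> = Psi Z u v * G (\<lambda>i. u i \<and> v i)"
    using u by (simp add: sum.delta finite_local_cfgs fin local_cfgs_iff)
  finally show ?thesis by simp
qed

lemma sum_Psi_indicator_and:
  assumes fin: "finite Z"
  shows "(\<Sum>u\<in>local_cfgs Z. \<Sum>v\<in>local_cfgs Z.
            \<Prod>i\<in>Z. psi1 (u i) (v i) * (if (u i \<and> v i) = w i then 1 else 0))
       = (1/2) ^ card Z * chi Z w"
proof -
  have "(\<Sum>u\<in>local_cfgs Z. \<Sum>v\<in>local_cfgs Z.
          \<Prod>i\<in>Z. psi1 (u i) (v i) * (if (u i \<and> v i) = w i then 1 else 0))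
      = (\<Prod>i\<in>Z. (1/2) * (if w i then -1 else 1))"
    unfolding sum_sum_prod_local_cfgs[OF fin, of "\<lambda>i a b. psi1 a b * (if (a \<and> b) = w i then 1 else 0)"]
    by (rule prod.cong) (auto simp: psi1_def)
  then show ?thesis by (simp only: prod.distrib prod_constant chi_eq_prod[OF fin])
qed

lemma sum_Psi_and:
  assumes fin: "finite Z"
  shows "(\<Sum>u\<in>local_cfgs Z. \<Sum>v\<in>local_cfgs Z. Psi Z u v * G (\<lambda>i. u i \<and> v i))
       = (1/2) ^ card Z * (\<Sum>w\<in>local_cfgs Z. G w * chi Z w)"
proof -
  let ?X = "\<lambda>u v w. \<Prod>i\<in>Z. psi1 (u i) (v i) * (if (u i \<and> v i) = w i then 1 else 0)"
  have "(\<Sum>u\<in>local_cfgs Z. \<Sum>v\<in>local_cfgs Z. Psi Z u v * G (\<lambda>i. u i \<and> v i))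
      = (\<Sum>u\<in>local_cfgs Z. \<Sum>v\<in>local_cfgs Z. \<Sum>w\<in>local_cfgs Z. G w * ?X u v w)"
    by (intro sum.cong refl) (rule Psi_mult_and_eq_sum[OF fin])
  also have "\<dots> = (\<Sum>u\<in>local_cfgs Z. \<Sum>w\<in>local_cfgs Z. \<Sum>v\<in>local_cfgs Z. G w * ?X u v w)"
    by (rule sum.cong[OF refl], rule sum.swap)
  also have "\<dots> = (\<Sum>w\<in>local_cfgs Z. G w * (\<Sum>u\<in>local_cfgs Z. \<Sum>v\<in>local_cfgs Z. ?X u v w))"
    by (subst sum.swap) (simp only: sum_distrib_left)
  also have "\<dots> = (1/2) ^ card Z * (\<Sum>w\<in>local_cfgs Z. G w * chi Z w)"
    by (simp add: sum_Psi_indicator_and[OF fin] sum_distrib_left mult_ac)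
  finally show ?thesis .
qed

lemma sum_abs_Psi: "finite Z \<Longrightarrow> (\<Sum>u\<in>local_cfgs Z. \<Sum>v\<in>local_cfgs Z. \<bar>Psi Z u v\<bar>) = 1"
  unfolding Psi_def abs_prod
  by (subst sum_sum_prod_local_cfgs[where f = "\<lambda>_ a b. \<bar>psi1 a b\<bar>"]) (simp_all add: psi1_def)

lemma sum_Mu: "finite Z \<Longrightarrow> (\<Sum>u\<in>local_cfgs Z. Mu Z u) = 1"
proof -
  assume "finite Z"
  then have "(\<Sum>u\<in>local_cfgs Z. \<Prod>i\<in>Z. mu1 (u i)) = (\<Prod>i\<in>Z. mu1 False + mu1 True)"
    by (rule sum_prod_local_cfgs)
  then show ?thesis unfolding Mu_def by (simp add: mu1_def)
qed

lemma Mu_pos: "0 < Mu Z u"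
  unfolding Mu_def mu1_def by (intro prod_pos) auto

lemma sum_Psi_Psi_div_Mu:
  assumes "finite Z"
  shows "(\<Sum>u\<in>local_cfgs Z. Psi Z u v * Psi Z u v' / Mu Z u) = (\<Prod>i\<in>Z. kappa1 (v i) (v' i))"
proof -
  have "(\<Sum>u\<in>local_cfgs Z. Psi Z u v * Psi Z u v' / Mu Z u)
      = (\<Sum>u\<in>local_cfgs Z. \<Prod>i\<in>Z. psi1 (u i) (v i) * psi1 (u i) (v' i) / mu1 (u i))"
    unfolding Psi_def Mu_def by (simp add: prod.distrib prod_dividef)
  also have "\<dots> = (\<Prod>i\<in>Z. kappa1 (v i) (v' i))"
    by (subst sum_prod_local_cfgs[OF assms]) (simp add: kappa1_def add.commute)
  finally show ?thesis .
qed

lemma sum_abs_prod_kappa1: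
  "finite Z \<Longrightarrow> (\<Sum>v\<in>local_cfgs Z. \<Sum>v'\<in>local_cfgs Z. \<bar>\<Prod>i\<in>Z. kappa1 (v i) (v' i)\<bar>) = (2/3) ^ card Z"
  unfolding abs_prod
  by (subst sum_sum_prod_local_cfgs[where f = "\<lambda>_ a b. \<bar>kappa1 a b\<bar>"])
     (simp_all add: kappa1_def psi1_def mu1_def)

lemma sum_sq_div_Mu_le:
  fixes b :: "cfg \<Rightarrow> real"
  assumes fin: "finite Z" and b: "\<forall>v. \<bar>b v\<bar> \<le> 1"
  shows "(\<Sum>u\<in>local_cfgs Z. (\<Sum>v\<in>local_cfgs Z. Psi Z u v * b v)\<^sup>2 / Mu Z u) \<le> (2/3) ^ card Z"
proof -
  have "(\<Sum>u\<in>local_cfgs Z. (\<Sum>v\<in>local_cfgs Z. Psi Z u v * b v)\<^sup>2 / Mu Z u)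
      = (\<Sum>u\<in>local_cfgs Z. \<Sum>v\<in>local_cfgs Z. \<Sum>v'\<in>local_cfgs Z.
           (b v * b v') * (Psi Z u v * Psi Z u v' / Mu Z u))"
    unfolding power2_eq_square sum_product sum_divide_distrib
    by (intro sum.cong refl) (simp add: mult_ac)
  also have "\<dots> = (\<Sum>v\<in>local_cfgs Z. \<Sum>v'\<in>local_cfgs Z. \<Sum>u\<in>local_cfgs Z.
           (b v * b v') * (Psi Z u v * Psi Z u v' / Mu Z u))"
    by (subst sum.swap) (rule sum.cong[OF refl], rule sum.swap)
  also have "\<dots> = (\<Sum>v\<in>local_cfgs Z. \<Sum>v'\<in>local_cfgs Z. (b v * b v') * (\<Prod>i\<in>Z. kappa1 (v i) (v' i)))"
    by (simp only: sum_distrib_left[symmetric] sum_Psi_Psi_div_Mu[OF fin])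
  also have "\<dots> \<le> (\<Sum>v\<in>local_cfgs Z. \<Sum>v'\<in>local_cfgs Z. \<bar>\<Prod>i\<in>Z. kappa1 (v i) (v' i)\<bar>)"
  proof (intro sum_mono)
    fix v v'
    have "\<bar>b v * b v'\<bar> \<le> 1" using b by (simp add: abs_mult mult_le_one)
    have "(b v * b v') * (\<Prod>i\<in>Z. kappa1 (v i) (v' i)) \<le> \<bar>b v * b v'\<bar> * \<bar>\<Prod>i\<in>Z. kappa1 (v i) (v' i)\<bar>"
      by (simp flip: abs_mult)
    also have "\<dots> \<le> 1 * \<bar>\<Prod>i\<in>Z. kappa1 (v i) (v' i)\<bar>"
      by (rule mult_right_mono[OF \<open>\<bar>b v * b v'\<bar> \<le> 1\<close> abs_ge_zero])
    finally show "(b v * b v') * (\<Prod>i\<in>Z. kappa1 (v i) (v' i)) \<le> \<bar>\<Prod>i\<in>Z. kappa1 (v i) (v' i)\<bar>"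
      by simp
  qed
  also have "\<dots> = (2/3) ^ card Z" by (rule sum_abs_prod_kappa1[OF fin])
  finally show ?thesis .
qed

lemma two_abs_mult_le: "0 < (t::real) \<Longrightarrow> 2 * (\<bar>x\<bar> * \<bar>y\<bar>) \<le> t * x\<^sup>2 + y\<^sup>2 / t"
proof -
  assume t: "0 < t"
  have "0 \<le> (t * \<bar>x\<bar> - \<bar>y\<bar>)\<^sup>2 / t" using t by simp
  also have "(t * \<bar>x\<bar> - \<bar>y\<bar>)\<^sup>2 / t = t * x\<^sup>2 + y\<^sup>2 / t - 2 * (\<bar>x\<bar> * \<bar>y\<bar>)"
    using t by (simp add: power2_eq_square field_simps)
  finally show ?thesis by simp
qed

lemma Psi_discrepancy:
  fixes a b :: "cfg \<Rightarrow> real"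
  assumes fin: "finite Z" and a: "\<forall>u. \<bar>a u\<bar> \<le> 1" and b: "\<forall>v. \<bar>b v\<bar> \<le> 1"
  shows "\<bar>\<Sum>u\<in>local_cfgs Z. \<Sum>v\<in>local_cfgs Z. Psi Z u v * a u * b v\<bar> \<le> sqrt ((2/3) ^ card Z)"
proof -
  define \<epsilon> where "\<epsilon> = sqrt ((2/3::real) ^ card Z)"
  define T where "T u = (\<Sum>v\<in>local_cfgs Z. Psi Z u v * b v)" for u
  have \<epsilon>: "0 < \<epsilon>" "\<epsilon>\<^sup>2 = (2/3) ^ card Z" unfolding \<epsilon>_def by simp_all
  have "\<bar>\<Sum>u\<in>local_cfgs Z. \<Sum>v\<in>local_cfgs Z. Psi Z u v * a u * b v\<bar> = \<bar>\<Sum>u\<in>local_cfgs Z. a u * T u\<bar>"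
    unfolding T_def by (simp add: sum_distrib_left mult_ac)
  also have "\<dots> \<le> (\<Sum>u\<in>local_cfgs Z. \<bar>a u\<bar> * \<bar>T u\<bar>)"
    by (rule order_trans[OF sum_abs]) (simp add: abs_mult)
  also have "\<dots> \<le> (\<Sum>u\<in>local_cfgs Z. (\<epsilon> * Mu Z u + ((T u)\<^sup>2 / Mu Z u) / \<epsilon>) / 2)"
  proof (rule sum_mono)
    fix u
    have t: "0 < \<epsilon> * Mu Z u" using \<epsilon> Mu_pos by simp
    have "(\<epsilon> * Mu Z u) * (a u)\<^sup>2 \<le> \<epsilon> * Mu Z u"
      using t a abs_le_square_iff[of "a u" 1] by (intro mult_left_le) auto
    then show "\<bar>a u\<bar> * \<bar>T u\<bar> \<le> (\<epsilon> * Mu Z u + ((T u)\<^sup>2 / Mu Z u) / \<epsilon>) / 2"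
      using two_abs_mult_le[OF t, of "a u" "T u"] by (simp add: mult.commute)
  qed
  also have "\<dots> = (\<epsilon> * (\<Sum>u\<in>local_cfgs Z. Mu Z u) + (\<Sum>u\<in>local_cfgs Z. (T u)\<^sup>2 / Mu Z u) / \<epsilon>) / 2"
    by (simp only: sum_divide_distrib[symmetric] sum.distrib sum_distrib_left)
  also have "\<dots> \<le> (\<epsilon> + \<epsilon>\<^sup>2 / \<epsilon>) / 2"
    using sum_sq_div_Mu_le[OF fin b] \<epsilon> unfolding T_def by (simp add: sum_Mu[OF fin] divide_right_mono)
  also have "\<dots> = \<epsilon>" using \<epsilon>(1) by (simp add: power2_eq_square)
  finally show ?thesis unfolding \<epsilon>_def .
qed

lemma nu_le_Psi_bound:
  assumes "nu_le W H" "finite Z"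
  shows "\<bar>\<Sum>u\<in>local_cfgs Z. \<Sum>v\<in>local_cfgs Z. Psi Z u v * H u v\<bar> \<le> W * sqrt ((2/3) ^ card Z)"
  using assms
proof (induction rule: nu_le.induct)
  case (rank1 a b)
  then show ?case using Psi_discrepancy[of Z a b] by (simp add: mult.assoc)
next
  case (scale W H c)
  have "(\<Sum>u\<in>local_cfgs Z. \<Sum>v\<in>local_cfgs Z. Psi Z u v * (c * H u v))
      = c * (\<Sum>u\<in>local_cfgs Z. \<Sum>v\<in>local_cfgs Z. Psi Z u v * H u v)"
    by (simp add: sum_distrib_left mult_ac)
  then show ?case using scale by (simp add: abs_mult mult.assoc mult_left_mono)
next
  case (add W1 H1 W2 H2)
  have "(\<Sum>u\<in>local_cfgs Z. \<Sum>v\<in>local_cfgs Z. Psi Z u v * (H1 u v + H2 u v))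
      = (\<Sum>u\<in>local_cfgs Z. \<Sum>v\<in>local_cfgs Z. Psi Z u v * H1 u v)
        + (\<Sum>u\<in>local_cfgs Z. \<Sum>v\<in>local_cfgs Z. Psi Z u v * H2 u v)"
    by (simp add: distrib_left sum.distrib)
  then show ?case using add by (simp add: distrib_right)
next
  case (mono W H W')
  then show ?case by (meson mult_right_mono order_trans real_sqrt_ge_zero zero_le_power zero_le_divide_iff zero_le_numeral)
qed simp

lemma approx_nu_lower_bound:
  assumes fin: "finite Z" and H: "nu_le W H"
    and approx: "\<And>u v. u \<in> local_cfgs Z \<Longrightarrow> v \<in> local_cfgs Z \<Longrightarrow> \<bar>G (\<lambda>i. u i \<and> v i) - H u v\<bar> \<le> \<eta>"
  shows "(1/2) ^ card Z * \<bar>\<Sum>w\<in>local_cfgs Z. G w * chi Z w\<bar> \<le> W * sqrt ((2/3) ^ card Z) + \<eta>"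
proof -
  let ?corr = "\<lambda>K. \<Sum>u\<in>local_cfgs Z. \<Sum>v\<in>local_cfgs Z. Psi Z u v * K u v"
  have "\<bar>?corr (\<lambda>u v. G (\<lambda>i. u i \<and> v i)) - ?corr H\<bar>
      = \<bar>\<Sum>u\<in>local_cfgs Z. \<Sum>v\<in>local_cfgs Z. Psi Z u v * (G (\<lambda>i. u i \<and> v i) - H u v)\<bar>"
    by (simp add: sum_subtractf right_diff_distrib)
  also have "\<dots> \<le> (\<Sum>u\<in>local_cfgs Z. \<Sum>v\<in>local_cfgs Z. \<bar>Psi Z u v\<bar> * \<eta>)"
    using approx
    by (intro order_trans[OF sum_abs] sum_mono order_trans[OF sum_abs])
       (simp add: abs_mult mult_left_mono)
  also have "\<dots> = \<eta>" by (simp add: sum_abs_Psi[OF fin] flip: sum_distrib_right)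
  finally have "\<bar>?corr (\<lambda>u v. G (\<lambda>i. u i \<and> v i))\<bar> \<le> \<bar>?corr H\<bar> + \<eta>" by linarith
  then show ?thesis
    using nu_le_Psi_bound[OF H fin] by (simp add: sum_Psi_and[OF fin] abs_mult)
qed

section \<open>Existence of a protocol\<close>

definition perm_mat :: "(cfg \<Rightarrow> cfg) \<Rightarrow> cfg \<Rightarrow> cfg \<Rightarrow> complex" where
  "perm_mat \<pi> c c' = (if c = \<pi> c' then 1 else 0)"

lemma unitary_on_perm_mat:
  assumes "finite S" "\<And>c. c \<in> local_cfgs S \<Longrightarrow> \<pi> c \<in> local_cfgs S" "inj_on \<pi> (local_cfgs S)"
  shows "unitary_on S (perm_mat \<pi>)"
  unfolding unitary_on_def perm_mat_def
proof (intro ballI)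
  fix a b assume a: "a \<in> local_cfgs S" and b: "b \<in> local_cfgs S"
  have "(\<Sum>c\<in>local_cfgs S. cnj (if c = \<pi> a then 1 else 0) * (if c = \<pi> b then 1 else 0))
      = (\<Sum>c\<in>local_cfgs S. if c = \<pi> a then (if \<pi> a = \<pi> b then 1 else 0) else 0)"
    by (intro sum.cong refl) auto
  also have "\<dots> = (if a = b then 1 else 0)"
    using assms a b by (simp add: sum.delta' finite_local_cfgs inj_on_eq_iff)
  finally show "(\<Sum>c\<in>local_cfgs S. cnj (if c = \<pi> a then 1 else 0) * (if c = \<pi> b then 1 else 0))
      = (if a = b then 1 else 0)" .
qed

definition supported_on_cube :: "nat \<Rightarrow> (cfg \<Rightarrow> complex) \<Rightarrow> bool" where
  "supported_on_cube m v \<longleftrightarrow> (\<forall>s. s \<notin> cube m \<longrightarrow> v s = 0)"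

lemma apply_local_perm_mat_id:
  assumes S: "S \<subseteq> {..<m}" and v: "supported_on_cube m v"
  shows "apply_local m S (perm_mat (\<lambda>c. c)) v = v"
proof
  fix s
  show "apply_local m S (perm_mat (\<lambda>c. c)) v s = v s"
  proof (cases "s \<in> cube m")
    case True
    have "apply_local m S (perm_mat (\<lambda>c. c)) v s
        = (\<Sum>c\<in>local_cfgs S. if c = restr S s then v (\<lambda>i. if i \<in> S then c i else s i) else 0)"
      unfolding apply_local_eq[OF S True] perm_mat_def by (intro sum.cong refl) auto
    also have "\<dots> = v (\<lambda>i. if i \<in> S then restr S s i else s i)"
      using S by (simp add: sum.delta' finite_local_cfgs finite_subset restr_in_local_cfgs)
    also have "(\<lambda>i. if i \<in> S then restr S s i else s i) = s"
      unfolding restr_def by auto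
    finally show ?thesis .
  next
    case False
    then obtain i where i: "m \<le> i" "s i" unfolding cube_def by auto
    then have "i \<notin> S" using S by auto
    then have empty: "{t\<in>cube m. \<forall>i. i \<notin> S \<longrightarrow> t i = s i} = {}"
      using i unfolding cube_def by auto
    show ?thesis using False v unfolding apply_local_def empty supported_on_cube_def by simp
  qed
qed

lemma run_send_all:
  assumes "\<forall>q\<in>set qs. q < m \<and> own q" "distinct qs" "supported_on_cube m v"
  shows "valid_rounds m (map (\<lambda>q. (True, perm_mat (\<lambda>c. c), q)) qs) own
       \<and> fst (run m (map (\<lambda>q. (True, perm_mat (\<lambda>c. c), q)) qs) own v) = (\<lambda>i. i \<notin> set qs \<and> own i)
       \<and> snd (run m (map (\<lambda>q. (True, perm_mat (\<lambda>c. c), q)) qs) own v) = v"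
  using assms
proof (induction qs arbitrary: own)
  case (Cons q qs)
  let ?rs = "map (\<lambda>q. (True, perm_mat (\<lambda>c. c), q)) qs"
  have q: "q < m" "own q" using Cons.prems by auto
  have ih: "valid_rounds m ?rs (own(q := False))
      \<and> fst (run m ?rs (own(q := False)) v) = (\<lambda>i. i \<notin> set qs \<and> (own(q := False)) i)
      \<and> snd (run m ?rs (own(q := False)) v) = v"
    using Cons.prems by (intro Cons.IH) auto
  have "unitary_on (owned m own True) (perm_mat (\<lambda>c. c))"
    by (intro unitary_on_perm_mat finite_owned) auto
  moreover have "apply_local m (owned m own True) (perm_mat (\<lambda>c. c)) v = v"
    using Cons.prems(3) by (intro apply_local_perm_mat_id) (auto simp: owned_def)
  moreover have "(\<lambda>i. i \<notin> set qs \<and> (own(q := False)) i) = (\<lambda>i. i \<notin> set (q # qs) \<and> own i)"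
    by (auto simp: fun_eq_iff)
  ultimately show ?case using ih q by simp
qed simp

definition x_part :: "nat \<Rightarrow> cfg \<Rightarrow> cfg" where
  "x_part n c = (\<lambda>i. i < n \<and> c i)"

definition y_part :: "nat \<Rightarrow> cfg \<Rightarrow> cfg" where
  "y_part n c = (\<lambda>i. i < n \<and> c (i + n))"

definition flip_out :: "nat \<Rightarrow> (cfg \<Rightarrow> cfg \<Rightarrow> bool) \<Rightarrow> cfg \<Rightarrow> cfg" where
  "flip_out n f c = c(2 * n := (c (2 * n) \<noteq> f (x_part n c) (y_part n c)))"

lemma flip_out_flip_out: "flip_out n f (flip_out n f c) = c"
proof -
  have "x_part n (flip_out n f c) = x_part n c" "y_part n (flip_out n f c) = y_part n c"
    unfolding x_part_def y_part_def flip_out_def by (auto simp: fun_eq_iff)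
  then have "flip_out n f (flip_out n f c)
      = (flip_out n f c)(2 * n := (flip_out n f c (2 * n) \<noteq> f (x_part n c) (y_part n c)))"
    unfolding flip_out_def[of n f "flip_out n f c"] by simp
  then show ?thesis by (auto simp: flip_out_def fun_eq_iff)
qed

lemma flip_out_in_local_cfgs: "c \<in> local_cfgs {..<Suc (2 * n)} \<Longrightarrow> flip_out n f c \<in> local_cfgs {..<Suc (2 * n)}"
  unfolding flip_out_def local_cfgs_iff by auto

text \<open>This protocol only serves to make the \<open>LEAST\<close> in \<^const>\<open>BQC\<close> attained.\<close>

definition naive_protocol :: "nat \<Rightarrow> (cfg \<Rightarrow> cfg \<Rightarrow> bool) \<Rightarrow> protocol" where
  "naive_protocol n f =
     \<lparr>nqubits = Suc (2 * n), owner0 = (\<lambda>i. i < n), rounds = map (\<lambda>q. (True, perm_mat (\<lambda>c. c), q)) [0..<n],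
      fin_player = False, fin_unitary = perm_mat (flip_out n f), out_qubit = 2 * n\<rparr>"

lemma run_naive_protocol:
  assumes "supported_on_cube (Suc (2 * n)) v"
  shows "valid_rounds (Suc (2 * n)) (rounds (naive_protocol n f)) (\<lambda>i. i < n)"
    and "run (Suc (2 * n)) (rounds (naive_protocol n f)) (\<lambda>i. i < n) v = (\<lambda>_. False, v)"
  using run_send_all[of "[0..<n]" "Suc (2 * n)" "\<lambda>i. i < n" v] assms
  by (auto simp: naive_protocol_def prod_eq_iff)

lemma unitary_on_flip_out: "unitary_on {..<Suc (2 * n)} (perm_mat (flip_out n f))"
  by (rule unitary_on_perm_mat) (auto simp: flip_out_in_local_cfgs intro: inj_on_inverseI flip_out_flip_out)

lemma naive_protocol_valid: "valid_protocol n (naive_protocol n f)"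
proof -
  have "owned (Suc (2 * n)) (\<lambda>_. False) False = {..<Suc (2 * n)}" unfolding owned_def by auto
  moreover have "supported_on_cube (Suc (2 * n)) (\<lambda>_. 0)" unfolding supported_on_cube_def by simp
  ultimately show ?thesis
    unfolding valid_protocol_def Let_def
    using run_naive_protocol unitary_on_flip_out by (simp add: naive_protocol_def)
qed

lemma accept_prob_naive_protocol:
  assumes x: "x \<in> cube n" and y: "y \<in> cube n"
  shows "accept_prob n (naive_protocol n f) x y = (if f x y then 1 else 0)"
proof -
  let ?m = "Suc (2 * n)" and ?i = "init_basis n x y"
  have i: "?i \<in> cube ?m" by (rule init_basis_in_cube) simp
  have "supported_on_cube ?m (init_vec n x y)" unfolding supported_on_cube_def using i by auto
  moreover have "owned ?m (\<lambda>_. False) False = {..<?m}" unfolding owned_def by auto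
  moreover have "supported_on_cube ?m (\<lambda>_. 0)" unfolding supported_on_cube_def by simp
  ultimately have fs: "final_state n (naive_protocol n f) x y
      = apply_local ?m {..<?m} (perm_mat (flip_out n f)) (init_vec n x y)"
    using run_naive_protocol(2) unfolding final_state_eq by (simp add: naive_protocol_def)
  have final: "final_state n (naive_protocol n f) x y s = (if s = flip_out n f ?i then 1 else 0)"
    if s: "s \<in> cube ?m" for s
  proof -
    have "restr {..<?m} s = s"
      using s by (simp add: restr_eq_self cube_eq_local_cfgs)
    moreover have "(\<lambda>j. if j \<in> {..<?m} then c j else s j) = c" if "c \<in> local_cfgs {..<?m}" for c
      using s that unfolding cube_eq_local_cfgs local_cfgs_iff by (auto simp: fun_eq_iff)
    ultimately have "apply_local ?m {..<?m} (perm_mat (flip_out n f)) (init_vec n x y) s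
        = (\<Sum>c\<in>local_cfgs {..<?m}. if c = ?i then perm_mat (flip_out n f) s c else 0)"
      unfolding apply_local_eq[OF subset_refl s] using s
      by (intro sum.cong refl) (auto simp: cube_eq_local_cfgs restr_eq_self)
    also have "\<dots> = perm_mat (flip_out n f) s ?i"
      using i by (simp add: sum.delta' cube_eq_local_cfgs finite_local_cfgs)
    finally show ?thesis unfolding fs perm_mat_def .
  qed
  have "x_part n ?i = x" "y_part n ?i = y"
    using x y unfolding x_part_def y_part_def init_basis_def cube_def by (auto simp: fun_eq_iff)
  then have "flip_out n f ?i (2 * n) = f x y"
    unfolding flip_out_def by (simp add: init_basis_def)
  moreover have "flip_out n f ?i \<in> cube ?m"
    using flip_out_in_local_cfgs[of ?i n f] i by (simp add: cube_eq_local_cfgs)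
  ultimately show ?thesis
    unfolding accept_prob_def using final
    by (simp add: naive_protocol_def if_distrib[of "\<lambda>z. (cmod z)\<^sup>2"] sum.delta' cube_eq_local_cfgs
        finite_local_cfgs cong: if_cong)
qed

lemma BQC_attained: "\<exists>P. valid_protocol n P \<and> computes n f P \<and> length (rounds P) = BQC n f"
proof -
  have "valid_protocol n (naive_protocol n f) \<and> computes n f (naive_protocol n f)"
    using naive_protocol_valid by (simp add: computes_def accept_prob_naive_protocol)
  then have "\<exists>P. valid_protocol n P \<and> computes n f P \<and> length (rounds P) = length (rounds (naive_protocol n f))"
    by blast
  then show ?thesis unfolding BQC_def by (rule LeastI)
qed

lemma join_band: "band (join r u) (join r v) = join r (\<lambda>i. u i \<and> v i)"
  unfolding band_def join_def by auto

lemma fourier_eq_sum_restrictions: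
  fixes n :: nat and z :: cfg
  defines "Z \<equiv> {i. i < n \<and> z i}"
  shows "fourier n g z = (1 / 2 ^ n) *
     (\<Sum>r\<in>local_cfgs ({..<n} - Z). \<Sum>w\<in>local_cfgs Z. (if g (join r w) then 1 else 0) * chi Z w)"
proof -
  have RZ: "({..<n} - Z) \<inter> Z = {}" "({..<n} - Z) \<union> Z = {..<n}" unfolding Z_def by auto
  have "{i. i < n \<and> join r w i \<and> z i} = {i\<in>Z. w i}"
    if "r \<in> local_cfgs ({..<n} - Z)" "w \<in> local_cfgs Z" for r w
    using that unfolding join_def local_cfgs_iff Z_def by auto
  then show ?thesis
    unfolding fourier_def sum_cube_split[OF RZ] chi_def by simp
qed

lemma abs_fourier_le_1: "\<bar>fourier n g z\<bar> \<le> 1"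
proof -
  have "\<bar>\<Sum>a\<in>cube n. (if g a then 1 else 0) * (-1::real) ^ card {i. i < n \<and> a i \<and> z i}\<bar>
      \<le> (\<Sum>a\<in>cube n. 1)"
    by (rule order_trans[OF sum_abs], rule sum_mono) (simp add: abs_mult)
  also have "\<dots> = 2 ^ n" by (simp add: cube_eq_local_cfgs card_local_cfgs)
  finally show ?thesis unfolding fourier_def by (simp add: abs_mult divide_le_eq)
qed

lemma exists_large_restriction:
  fixes n :: nat and z :: cfg
  defines "Z \<equiv> {i. i < n \<and> z i}"
  shows "\<exists>r\<in>local_cfgs ({..<n} - Z).
     2 ^ card Z * \<bar>fourier n g z\<bar> \<le> \<bar>\<Sum>w\<in>local_cfgs Z. (if g (join r w) then 1 else 0) * chi Z w\<bar>"
proof (rule ccontr)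
  define R where "R = {..<n} - Z"
  define S where "S r = (\<Sum>w\<in>local_cfgs Z. (if g (join r w) then 1 else 0) * chi Z w)" for r
  assume "\<not> ?thesis"
  then have less: "\<bar>S r\<bar> < 2 ^ card Z * \<bar>fourier n g z\<bar>" if "r \<in> local_cfgs R" for r
    using that unfolding R_def S_def by force
  have card: "card R + card Z = n"
  proof -
    have "card Z \<le> n" unfolding Z_def using card_mono[of "{..<n}" "{i. i < n \<and> z i}"] by auto
    then show ?thesis unfolding R_def by (subst card_Diff_subset) (auto simp: Z_def)
  qed
  have "2 ^ n * \<bar>fourier n g z\<bar> = \<bar>\<Sum>r\<in>local_cfgs R. S r\<bar>"
    unfolding fourier_eq_sum_restrictions[of n g z] S_def R_def Z_def by (simp add: abs_mult)
  also have "\<dots> \<le> (\<Sum>r\<in>local_cfgs R. \<bar>S r\<bar>)" by (rule sum_abs)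
  also have "\<dots> < (\<Sum>r\<in>local_cfgs R. 2 ^ card Z * \<bar>fourier n g z\<bar>)"
    using less local_cfgs_iff[of "\<lambda>_. False" R]
    by (intro sum_strict_mono) (auto simp: finite_local_cfgs R_def)
  also have "\<dots> = 2 ^ n * \<bar>fourier n g z\<bar>"
    using card by (simp add: card_local_cfgs R_def power_add[symmetric])
  finally show False by simp
qed

lemma computes_eq_if_accept_prob_eq:
  assumes "computes n f P" "x \<in> cube n" "y \<in> cube n" "x' \<in> cube n" "y' \<in> cube n"
    and "accept_prob n P x y = accept_prob n P x' y'"
  shows "f x y = f x' y'"
proof -
  have "if f x y then 2/3 \<le> accept_prob n P x y else accept_prob n P x y \<le> 1/3"
       "if f x' y' then 2/3 \<le> accept_prob n P x' y' else accept_prob n P x' y' \<le> 1/3"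
    using assms(1-5) unfolding computes_def by blast+
  then show ?thesis using assms(6) by (auto split: if_splits)
qed

lemma sum_restriction_eq_0_if_no_rounds:
  assumes fg: "\<forall>x\<in>cube n. \<forall>y\<in>cube n. f x y = g (band x y)"
    and P: "valid_protocol n P" "computes n f P" "rounds P = []"
    and RZ: "R \<inter> Z = {}" "R \<union> Z = {..<n}" and r: "r \<in> local_cfgs R" and Z: "Z \<noteq> {}"
  shows "(\<Sum>w\<in>local_cfgs Z. (if g (join r w) then 1 else 0) * chi Z w) = 0"
proof -
  have cube: "join r u \<in> cube n" if "u \<in> local_cfgs Z" for u
    using join_in_local_cfgs[OF r that] RZ(2) by (simp add: cube_eq_local_cfgs)
  have g_join: "g (join r (\<lambda>i. u i \<and> v i)) = f (join r u) (join r v)"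
    if "u \<in> local_cfgs Z" "v \<in> local_cfgs Z" for u v
    using fg cube that by (simp add: join_band)
  define ones where "ones i = (i \<in> Z)" for i
  have ones: "ones \<in> local_cfgs Z" and zeros: "(\<lambda>_. False) \<in> local_cfgs Z"
    unfolding ones_def local_cfgs_iff by auto
  have const: "g (join r u) = g (join r (\<lambda>_. False))" if u: "u \<in> local_cfgs Z" for u
  proof -
    have "(\<lambda>i. u i \<and> ones i) = u" "(\<lambda>i. ones i \<and> u i) = u"
      using u unfolding ones_def local_cfgs_iff by auto
    then have g_u: "g (join r u) = f (join r u) (join r ones)" "g (join r u) = f (join r ones) (join r u)"
      using g_join[OF u ones] g_join[OF ones u] by simp_all
    have g_0: "g (join r (\<lambda>_. False)) = f (join r u) (join r (\<lambda>_. False))"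
        "g (join r (\<lambda>_. False)) = f (join r (\<lambda>_. False)) (join r u)"
      using g_join[OF u zeros] g_join[OF zeros u] by simp_all
    from accept_prob_no_rounds[OF P(1,3)] show ?thesis
    proof
      assume "\<forall>x y y'. accept_prob n P x y = accept_prob n P x y'"
      then show ?thesis unfolding g_u(1) g_0(1)
        by (intro computes_eq_if_accept_prob_eq[OF P(2)] cube u ones zeros) blast
    next
      assume "\<forall>x x' y. accept_prob n P x y = accept_prob n P x' y"
      then show ?thesis unfolding g_u(2) g_0(2)
        by (intro computes_eq_if_accept_prob_eq[OF P(2)] cube u ones zeros) blast
    qed
  qed
  have "finite Z" using RZ(2) by (metis finite_Un finite_lessThan)
  then show ?thesis
    using const sum_chi_eq_0[OF _ Z] by (simp add: sum_distrib_left[symmetric])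
qed

lemma amplification_error_le:
  fixes \<gamma> :: real
  assumes "0 < \<gamma>" "\<gamma> \<le> 1"
  shows "(8/9) ^ nat \<lceil>6 * (1 - log 2 \<gamma>)\<rceil> \<le> \<gamma> / 2"
proof -
  define D where "D = 1 - log 2 \<gamma>"
  have D: "1 \<le> D" unfolding D_def using assms by simp
  have "(8/9::real) ^ nat \<lceil>6 * D\<rceil> = (8/9) powr (real (nat \<lceil>6 * D\<rceil>))" by (simp add: powr_realpow)
  also have "\<dots> \<le> (8/9) powr (6 * D)" by (rule powr_mono') (use D in linarith)+
  also have "\<dots> = ((8/9) powr 6) powr D" by (rule powr_powr[symmetric])
  also have "\<dots> \<le> (1/2) powr D"
  proof (rule powr_mono2)
    have "(8/9::real) powr 6 = (8/9) ^ 6" by (subst powr_realpow[symmetric]) auto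
    then show "(8/9::real) powr 6 \<le> 1/2" by (simp add: field_simps)
  qed (use D in auto)
  also have "\<dots> = 2 powr (- D)" by (simp add: powr_minus_divide powr_divide)
  also have "\<dots> = 2 powr (log 2 \<gamma> - 1)" unfolding D_def by simp
  also have "\<dots> = \<gamma> / 2" using assms by (simp add: powr_diff)
  finally show ?thesis unfolding D_def .
qed

lemma sqrt_two_thirds_power_le: "sqrt ((2/3::real) ^ k) \<le> 2 powr (- real k / 4)"
proof -
  have "(2/3::real) ^ k = (2/3) powr (real k)" by (simp add: powr_realpow)
  also have "\<dots> = ((2/3) powr 2) powr (real k / 2)" by (simp only: powr_powr) simp
  also have "\<dots> \<le> (1/2) powr (real k / 2)"
  proof (rule powr_mono2)
    have "(2/3::real) powr 2 = (2/3) ^ 2" by (subst powr_realpow[symmetric]) auto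
    then show "(2/3::real) powr 2 \<le> 1/2" by (simp add: power2_eq_square)
  qed auto
  also have "\<dots> = 2 powr (- real k / 2)" by (simp add: powr_minus_divide powr_divide)
  finally have "sqrt ((2/3::real) ^ k) \<le> sqrt (2 powr (- real k / 2))" by (rule real_sqrt_le_mono)
  also have "\<dots> = 2 powr (- real k / 4)" by (simp add: powr_half_sqrt_powr[symmetric])
  finally show ?thesis .
qed

lemma amplified_weight_le: "(4::real) ^ e * (1 + 2 * 4 ^ c) ^ (2 * e) \<le> 2 powr (real (e * (4 * c + 6)))"
proof -
  have "(1::real) + 2 * 4 ^ c \<le> 4 ^ (c + 1)"
    using one_le_power[of "4::real" c] by (simp only: power_Suc Suc_eq_plus1[symmetric]) linarith
  then have "(4::real) ^ e * (1 + 2 * 4 ^ c) ^ (2 * e) \<le> 4 ^ e * (4 ^ (c + 1)) ^ (2 * e)"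
    by (intro mult_left_mono power_mono) auto
  also have "\<dots> = 4 ^ (e + (c + 1) * (2 * e))"
    by (simp only: power_add power_mult)
  also have "\<dots> = 2 ^ (2 * (e + (c + 1) * (2 * e)))"
    unfolding power_mult by simp
  also have "2 * (e + (c + 1) * (2 * e)) = e * (4 * c + 6)"
    by (simp add: algebra_simps)
  also have "(2::real) ^ (e * (4 * c + 6)) = 2 powr (real (e * (4 * c + 6)))"
    by (rule powr_realpow[symmetric]) simp
  finally show ?thesis .
qed

lemma rounds_lower_bound_arith:
  fixes \<gamma> :: real and c k :: nat
  defines "e \<equiv> nat \<lceil>6 * (1 - log 2 \<gamma>)\<rceil>"
  assumes \<gamma>: "0 < \<gamma>" "\<gamma> \<le> 1" and c: "1 \<le> c"
    and main: "\<gamma> / 2 \<le> 4 ^ e * (1 + 2 * 4 ^ c) ^ (2 * e) * sqrt ((2/3) ^ k)"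
  shows "real k \<le> 300 * real c * (1 - log 2 \<gamma>)"
proof -
  define D where "D = 1 - log 2 \<gamma>"
  have D: "1 \<le> D" unfolding D_def using \<gamma> by simp
  have e: "real e \<le> 7 * D" unfolding e_def D_def[symmetric] using D by linarith
  have "2 powr (log 2 \<gamma> - 1) = \<gamma> / 2" using \<gamma> by (simp add: powr_diff)
  also have "\<dots> \<le> 2 powr (real (e * (4 * c + 6))) * 2 powr (- real k / 4)"
    using main by (rule order_trans) (intro mult_mono amplified_weight_le sqrt_two_thirds_power_le; simp)
  also have "\<dots> = 2 powr (real (e * (4 * c + 6)) - real k / 4)" by (simp add: powr_add[symmetric])
  finally have "log 2 \<gamma> - 1 \<le> real (e * (4 * c + 6)) - real k / 4" by simp
  then have "real k \<le> 4 * (real e * (4 * real c + 6)) + 4 * D" unfolding D_def by simp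
  also have "\<dots> \<le> 4 * (7 * D * (4 * real c + 6)) + 4 * D"
    using e by (intro add_right_mono mult_left_mono mult_right_mono) auto
  also have "\<dots> \<le> 300 * real c * D" using D c by (simp add: algebra_simps)
  finally show ?thesis unfolding D_def .
qed

lemma restricted_character_sum_le:
  assumes fg: "\<forall>x\<in>cube n. \<forall>y\<in>cube n. f x y = g (band x y)"
    and P: "valid_protocol n P" "computes n f P"
    and RZ: "R \<inter> Z = {}" "R \<union> Z = {..<n}" and r: "r \<in> local_cfgs R"
  shows "(1/2) ^ card Z * \<bar>\<Sum>w\<in>local_cfgs Z. (if g (join r w) then 1 else 0) * chi Z w\<bar>
       \<le> 4 ^ e * (1 + 2 * 4 ^ length (rounds P)) ^ (2 * e) * sqrt ((2/3) ^ card Z) + (8/9) ^ e"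
proof (rule approx_nu_lower_bound)
  show "finite Z" using RZ(2) by (metis finite_Un finite_lessThan)
  show "nu_le (4 ^ e * (1 + 2 * 4 ^ length (rounds P)) ^ (2 * e))
          (\<lambda>u v. amplify e (accept_prob n P (join r u) (join r v)))"
    using nu_le_amplify[OF nu_le_compose[OF nu_le_accept_prob[OF P(1)], of "join r" "join r"]] by simp
  have cube: "join r u \<in> cube n" if "u \<in> local_cfgs Z" for u
    using join_in_local_cfgs[OF r that] RZ(2) by (simp add: cube_eq_local_cfgs)
  show "\<bar>(if g (join r (\<lambda>i. u i \<and> v i)) then 1 else 0) - amplify e (accept_prob n P (join r u) (join r v))\<bar>
      \<le> (8/9) ^ e" if "u \<in> local_cfgs Z" "v \<in> local_cfgs Z" for u v
    using amplify_accept_prob_approx[OF P cube[OF that(1)] cube[OF that(2)], of e]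
      fg cube[OF that(1)] cube[OF that(2)]
    by (simp add: join_band)
qed

lemma hw_le_rounds:
  assumes fg: "\<forall>x\<in>cube n. \<forall>y\<in>cube n. f x y = g (band x y)"
    and nz: "fourier n g z \<noteq> 0" and P: "valid_protocol n P" "computes n f P"
  shows "real (hw n z) \<le> 300 * real (length (rounds P)) * (1 - log 2 \<bar>fourier n g z\<bar>)"
proof -
  define \<gamma> where "\<gamma> = \<bar>fourier n g z\<bar>"
  define Z where "Z = {i. i < n \<and> z i}"
  define c where "c = length (rounds P)"
  define S where "S r = (\<Sum>w\<in>local_cfgs Z. (if g (join r w) then 1 else 0) * chi Z w)" for r
  have \<gamma>: "0 < \<gamma>" "\<gamma> \<le> 1" unfolding \<gamma>_def using nz abs_fourier_le_1 by auto
  have RZ: "({..<n} - Z) \<inter> Z = {}" "({..<n} - Z) \<union> Z = {..<n}" unfolding Z_def by auto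
  obtain r where r: "r \<in> local_cfgs ({..<n} - Z)" and large: "2 ^ card Z * \<gamma> \<le> \<bar>S r\<bar>"
    using exists_large_restriction[of n z g] unfolding \<gamma>_def Z_def S_def by blast
  have hw: "hw n z = card Z" unfolding hw_def Z_def ..
  show ?thesis
  proof (cases "c = 0")
    case True
    have "0 < 2 ^ card Z * \<gamma>" using \<gamma> by simp
    then have "Z = {}"
      using large sum_restriction_eq_0_if_no_rounds[OF fg P _ RZ r] True unfolding c_def S_def by fastforce
    then show ?thesis using \<gamma> unfolding hw \<gamma>_def[symmetric] by simp
  next
    case False
    define e where "e = nat \<lceil>6 * (1 - log 2 \<gamma>)\<rceil>"
    have "\<gamma> \<le> (1/2) ^ card Z * \<bar>S r\<bar>"
      using large by (simp add: field_simps)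
    moreover have "(8/9) ^ e \<le> \<gamma> / 2" unfolding e_def by (rule amplification_error_le[OF \<gamma>])
    ultimately have "\<gamma> / 2 \<le> 4 ^ e * (1 + 2 * 4 ^ c) ^ (2 * e) * sqrt ((2/3) ^ card Z)"
      using restricted_character_sum_le[OF fg P RZ r, of e] unfolding S_def c_def by linarith
    then show ?thesis
      using rounds_lower_bound_arith[OF \<gamma>, of c] False unfolding e_def hw c_def \<gamma>_def by simp
  qed
qed

theorem theorem6p1:
  shows "\<exists>C>0. \<forall>n (f :: cfg \<Rightarrow> cfg \<Rightarrow> bool) (g :: cfg \<Rightarrow> bool) z.
     (\<forall>x\<in>cube n. \<forall>y\<in>cube n. f x y = g (band x y)) \<longrightarrow>
     z \<in> cube n \<longrightarrow> fourier n g z \<noteq> 0 \<longrightarrow>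
     real (BQC n f) \<ge> C * real (hw n z) / (1 - log 2 \<bar>fourier n g z\<bar>)"
proof (intro exI[of _ "1/300"] conjI allI impI)
  show "(0::real) < 1/300" by simp
  fix n f g z
  assume fg: "\<forall>x\<in>cube n. \<forall>y\<in>cube n. f x y = (g :: cfg \<Rightarrow> bool) (band x y)"
    and "z \<in> cube n" and nz: "fourier n g z \<noteq> 0"
  obtain P where P: "valid_protocol n P" "computes n f P" "length (rounds P) = BQC n f"
    using BQC_attained by blast
  have "real (hw n z) \<le> 300 * real (BQC n f) * (1 - log 2 \<bar>fourier n g z\<bar>)"
    using hw_le_rounds[OF fg nz P(1,2)] P(3) by simp
  moreover have "0 < 1 - log 2 \<bar>fourier n g z\<bar>"
    using nz abs_fourier_le_1[of n g z] by simp
  ultimately show "1/300 * real (hw n z) / (1 - log 2 \<bar>fourier n g z\<bar>) \<le> real (BQC n f)"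
    by (simp add: divide_le_eq mult_ac)
qed

end
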